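(* Let $r\in\{1,\infty\}$ and $N\in\{0,2,3,\ldots\}$. Every separable metric space of diameter no greater than $r$ admits an isometric embedding into the metric space $\mathbb{G}_r(N)$ (with metric $(x,y)\mapsto p(x-y)$, $p$ its value).
   Context: All groups are Abelian. A value on $G$ is $p\colon G\to[0,\infty)$ with $p(x)=0\iff x=0$, $p(-x)=p(x)$, $p(x+y)\leqslant p(x)+p(y)$. Class $\mathcal{O}_0$: $\lim_n p(na)/n=0$ for all $a$. $\mathfrak{G}_r(N)$: separable valued Abelian groups of class $\mathcal{O}_0$ with $p\leqslant r$ (vacuous if $r=\infty$) and of exponent $N$ if $N\neq0$. $\mathbb{G}_r(N)$ is the valued Abelian group, unique up to isometric group isomorphism, which (G1) is complete and in $\mathfrak{G}_r(N)$; (G2) for every finite valued Abelian group $(H,+,q)$ (of exponent $N$ if $N\neq0$) with $q\leqslant r$, subgroup $K$, isometric homomorphism $\varphi\colon K\to\mathbb{G}_r(N)$ and $\varepsilon\in(0,1)$, there is a homomorphism $\varphi_\varepsilon\colon H\to\mathbb{G}_r(N)$ with $p(\varphi(x)-\varphi_\varepsilon(x))\leqslant\varepsilon$ on $K$ and $(1-\varepsilon)q\leqslant p\circ\varphi_\varepsilon\leqslant(1+\varepsilon)q$ on $H$; (G3) if $N=0$, finite-order elements are dense. *)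

theory Defs
  imports "HOL-Analysis.Analysis" "HOL-Algebra.Algebra"
begin

definition natmul :: "nat \<Rightarrow> 'g::ab_group_add \<Rightarrow> 'g" where
  "natmul n x = (\<Sum>i<n. x)"

definition is_value :: "('g::ab_group_add \<Rightarrow> real) \<Rightarrow> bool" where
  "is_value p \<longleftrightarrow> (\<forall>x. p x \<ge> 0) \<and> (\<forall>x. p x = 0 \<longleftrightarrow> x = 0) \<and>
     (\<forall>x. p (- x) = p x) \<and> (\<forall>x y. p (x + y) \<le> p x + p y)"

definition is_value_on :: "('h, 'm) monoid_scheme \<Rightarrow> ('h \<Rightarrow> real) \<Rightarrow> bool" where
  "is_value_on H q \<longleftrightarrow> (\<forall>x\<in>carrier H. q x \<ge> 0) \<and>
     (\<forall>x\<in>carrier H. q x = 0 \<longleftrightarrow> x = \<one>\<^bsub>H\<^esub>) \<and>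
     (\<forall>x\<in>carrier H. q (inv\<^bsub>H\<^esub> x) = q x) \<and>
     (\<forall>x\<in>carrier H. \<forall>y\<in>carrier H. q (x \<otimes>\<^bsub>H\<^esub> y) \<le> q x + q y)"

definition value_dist :: "('g::ab_group_add \<Rightarrow> real) \<Rightarrow> 'g \<Rightarrow> 'g \<Rightarrow> real" where
  "value_dist p x y = p (x - y)"

definition class_O0 :: "('g::ab_group_add \<Rightarrow> real) \<Rightarrow> bool" where
  "class_O0 p \<longleftrightarrow> (\<forall>a. (\<lambda>n. p (natmul n a) / real n) \<longlonglongrightarrow> 0)"

text \<open>Membership in the class G_r(N) (r = \<infinity> makes the bound vacuous;
  exponent N means N x = 0 for all x, imposed only when N \<noteq> 0).\<close>
definition in_frakG :: "ereal \<Rightarrow> nat \<Rightarrow> ('g::ab_group_add \<Rightarrow> real) \<Rightarrow> bool" where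
  "in_frakG r N p \<longleftrightarrow> is_value p \<and>
     separable_space (Metric_space.mtopology UNIV (value_dist p)) \<and>
     class_O0 p \<and> (\<forall>x. ereal (p x) \<le> r) \<and>
     (N \<noteq> 0 \<longrightarrow> (\<forall>x::'g. natmul N x = 0))"

text \<open>Property (G2). Finite valued Abelian groups H are represented as HOL-Algebra
  commutative groups with carrier a finite set of naturals (every finite group is
  isomorphic to such a one).\<close>
definition G2_property :: "ereal \<Rightarrow> nat \<Rightarrow> ('g::ab_group_add \<Rightarrow> real) \<Rightarrow> bool" where
  "G2_property r N p \<longleftrightarrow>
    (\<forall>(H :: nat monoid) q K \<phi> \<epsilon>.
       comm_group H \<and> finite (carrier H) \<and>
       (N \<noteq> 0 \<longrightarrow> (\<forall>x\<in>carrier H. x [^]\<^bsub>H\<^esub> N = \<one>\<^bsub>H\<^esub>)) \<and>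
       is_value_on H q \<and> (\<forall>x\<in>carrier H. ereal (q x) \<le> r) \<and>
       subgroup K H \<and>
       (\<forall>x\<in>K. \<forall>y\<in>K. \<phi> (x \<otimes>\<^bsub>H\<^esub> y) = \<phi> x + \<phi> y) \<and>
       (\<forall>x\<in>K. p (\<phi> x) = q x) \<and>
       0 < \<epsilon> \<and> \<epsilon> < 1
     \<longrightarrow> (\<exists>\<psi> :: nat \<Rightarrow> 'g.
            (\<forall>x\<in>carrier H. \<forall>y\<in>carrier H. \<psi> (x \<otimes>\<^bsub>H\<^esub> y) = \<psi> x + \<psi> y) \<and>
            (\<forall>x\<in>K. p (\<phi> x - \<psi> x) \<le> \<epsilon>) \<and>
            (\<forall>x\<in>carrier H. (1 - \<epsilon>) * q x \<le> p (\<psi> x) \<and> p (\<psi> x) \<le> (1 + \<epsilon>) * q x)))"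

definition is_bbG :: "ereal \<Rightarrow> nat \<Rightarrow> ('g::ab_group_add \<Rightarrow> real) \<Rightarrow> bool" where
  "is_bbG r N p \<longleftrightarrow>
     in_frakG r N p \<and> Metric_space.mcomplete UNIV (value_dist p) \<and>
     G2_property r N p \<and>
     (N = 0 \<longrightarrow> Metric_space.mtopology UNIV (value_dist p) closure_of
                  {x. \<exists>n>0. natmul n x = 0} = UNIV)"

end

theory Submission
  imports Defs
begin

(* Enumerate a dense sequence x_0, x_1, ... of M and put D a b = d x_a x_b. On the finite groups
   Z_n = (Z/m)^{0..n} (m = N, or m = 2 when N = 0) the Kuratowski coordinates a |-> D a i - D 0 i
   induce a value: the supremum over i of the Lebesgue measure of the set where the Z/m-valued step
   function sum_a c_a * 1_[0, D a i - D 0 i) does not vanish, clipped at 1 if r = 1 and perturbed by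
   eps_n * [c ~= 0]. On e_a - e_b it equals D a b up to an error eps_n.
   Property (G2), applied on Z_n x Z_(n+1) to the amalgam of the pull-back of p along the previous
   approximation and the value of Z_(n+1), yields (1 +- eps_n)-isometric homomorphisms psi_n from Z_n
   into G with psi_(n+1) close to psi_n on Z_n. As eps_n = 2^-(n+2), the images of each e_a form a
   Cauchy sequence; by completeness of G their limits realise D exactly, and this isometric copy of
   the dense sequence extends to all of M. *)

lemma is_valueD:
  assumes "is_value p"
  shows "0 \<le> p x" "p x = 0 \<longleftrightarrow> x = 0" "p (- x) = p x" "p (x + y) \<le> p x + p y"
  using assms unfolding is_value_def by blast+

lemma value_zero: "is_value p \<Longrightarrow> p 0 = 0"
  using is_valueD(2) by blast

lemma value_diff_commute: "is_value p \<Longrightarrow> p (x - y) = p (y - x)"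
  using is_valueD(3)[of p "x - y"] by simp

lemma value_diff_triangle: "is_value p \<Longrightarrow> p (x - z) \<le> p (x - y) + p (y - z)"
  using is_valueD(4)[of p "x - y" "y - z"] by simp

lemma value_diff_le: "is_value p \<Longrightarrow> p (x - y) \<le> p x + p y"
  using is_valueD(3,4)[of p] by (metis diff_conv_add_uminus)

lemma Metric_space_value_dist: "is_value p \<Longrightarrow> Metric_space UNIV (value_dist p)"
  by unfold_locales
    (auto simp: value_dist_def is_valueD value_diff_commute value_diff_triangle)

lemma is_value_onD:
  assumes "is_value_on G q"
  shows "x \<in> carrier G \<Longrightarrow> 0 \<le> q x" "x \<in> carrier G \<Longrightarrow> q x = 0 \<longleftrightarrow> x = \<one>\<^bsub>G\<^esub>"
    "x \<in> carrier G \<Longrightarrow> q (inv\<^bsub>G\<^esub> x) = q x"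
    "x \<in> carrier G \<Longrightarrow> y \<in> carrier G \<Longrightarrow> q (x \<otimes>\<^bsub>G\<^esub> y) \<le> q x + q y"
  using assms unfolding is_value_on_def by blast+

definition is_pvalue_on :: "('h, 'm) monoid_scheme \<Rightarrow> ('h \<Rightarrow> real) \<Rightarrow> bool" where
  "is_pvalue_on H q \<longleftrightarrow> (\<forall>x\<in>carrier H. q x \<ge> 0) \<and> q \<one>\<^bsub>H\<^esub> = 0 \<and>
     (\<forall>x\<in>carrier H. q (inv\<^bsub>H\<^esub> x) = q x) \<and>
     (\<forall>x\<in>carrier H. \<forall>y\<in>carrier H. q (x \<otimes>\<^bsub>H\<^esub> y) \<le> q x + q y)"

lemma value_add_pvalue:
  assumes "is_value_on G q" "is_pvalue_on G q'" "group G"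
  shows "is_value_on G (\<lambda>x. q x + q' x)"
  using assms monoid.one_closed[OF group.is_monoid[OF assms(3)]]
  unfolding is_value_on_def is_pvalue_on_def by (smt (verit, best))

lemma value_scale: "is_value_on G q \<Longrightarrow> 0 < k \<Longrightarrow> is_value_on G (\<lambda>x. k * q x)"
  unfolding is_value_on_def by (auto simp: distrib_left[symmetric] intro: mult_left_mono)

lemma pvalue_scale: "is_pvalue_on G q \<Longrightarrow> 0 \<le> k \<Longrightarrow> is_pvalue_on G (\<lambda>x. k * q x)"
  unfolding is_pvalue_on_def by (auto simp: distrib_left[symmetric] intro: mult_left_mono)

lemma pvalue_add: "is_pvalue_on G q \<Longrightarrow> is_pvalue_on G q' \<Longrightarrow> is_pvalue_on G (\<lambda>x. q x + q' x)"
  unfolding is_pvalue_on_def by (smt (verit, best))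

definition clip :: "ereal \<Rightarrow> real \<Rightarrow> real" where
  "clip r t = (if r = 1 then min 1 t else t)"

lemma clip_le: "clip r t \<le> t"
  by (simp add: clip_def)

lemma clip_eq: "ereal t \<le> r \<Longrightarrow> clip r t = t"
  by (auto simp: clip_def one_ereal_def)

lemma clip_le_r: "r = 1 \<or> r = \<infinity> \<Longrightarrow> ereal (clip r t) \<le> r"
  by (auto simp: clip_def one_ereal_def)

lemma value_clip:
  assumes "is_value_on G q"
  shows "is_value_on G (\<lambda>x. clip r (q x))"
proof -
  have "min 1 (q (x \<otimes>\<^bsub>G\<^esub> y)) \<le> min 1 (q x) + min 1 (q y)"
    if "x \<in> carrier G" "y \<in> carrier G" for x y
    using is_value_onD[OF assms] that by (smt (verit))
  moreover have "min 1 (q x) = 0 \<longleftrightarrow> q x = 0" for x :: 'a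
    by (simp add: min_def)
  ultimately show ?thesis
    using assms unfolding is_value_on_def clip_def by auto
qed

lemma pvalue_clip:
  assumes "is_pvalue_on G q"
  shows "is_pvalue_on G (\<lambda>x. clip r (q x))"
proof -
  have "min 1 (q (x \<otimes>\<^bsub>G\<^esub> y)) \<le> min 1 (q x) + min 1 (q y)"
    if "x \<in> carrier G" "y \<in> carrier G" for x y
    using assms that unfolding is_pvalue_on_def by (smt (verit))
  then show ?thesis
    using assms unfolding is_pvalue_on_def clip_def by auto
qed

definition additive_on :: "'b set \<Rightarrow> ('b, 'm) monoid_scheme \<Rightarrow> ('b \<Rightarrow> 'g::ab_group_add) \<Rightarrow> bool" where
  "additive_on S G \<psi> \<longleftrightarrow> (\<forall>x\<in>S. \<forall>y\<in>S. \<psi> (x \<otimes>\<^bsub>G\<^esub> y) = \<psi> x + \<psi> y)"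

lemma additive_onD:
  "additive_on S G \<psi> \<Longrightarrow> x \<in> S \<Longrightarrow> y \<in> S \<Longrightarrow> \<psi> (x \<otimes>\<^bsub>G\<^esub> y) = \<psi> x + \<psi> y"
  unfolding additive_on_def by blast

lemma (in group) additive_on_one:
  assumes "additive_on (carrier G) G \<psi>"
  shows "\<psi> \<one> = 0"
  using additive_onD[OF assms one_closed one_closed] by simp

lemma (in group) additive_on_inv:
  assumes "additive_on (carrier G) G \<psi>" "x \<in> carrier G"
  shows "\<psi> (inv x) = - \<psi> x"
  using additive_onD[OF assms(1) assms(2) inv_closed[OF assms(2)]] additive_on_one[OF assms(1)] assms(2)
  by (simp add: eq_neg_iff_add_eq_0 add.commute)

lemma (in group) is_value_on_additive:
  assumes "additive_on (carrier G) G \<psi>" "is_value p"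
    and "\<And>x. x \<in> carrier G \<Longrightarrow> \<psi> x = 0 \<Longrightarrow> x = \<one>"
  shows "is_value_on G (\<lambda>x. p (\<psi> x))"
  using assms additive_on_one[OF assms(1)] additive_on_inv[OF assms(1)]
  unfolding is_value_on_def additive_on_def by (auto simp: is_valueD)

lemma (in Metric_space) mdist_diff_le:
  assumes "a \<in> M" "b \<in> M" "x \<in> M" "y \<in> M"
  shows "\<bar>d a b - d x y\<bar> \<le> d a x + d b y"
  using triangle[of a x b] triangle[of x y b] triangle[of x a y] triangle[of a b y] assms
  by (simp add: commute abs_le_iff)

lemma (in Metric_space) tendsto_mdist:
  assumes s: "limitin mtopology s x sequentially" and t: "limitin mtopology t y sequentially"
  shows "(\<lambda>n. d (s n) (t n)) \<longlonglongrightarrow> d x y"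
proof (rule LIMSEQ_I)
  fix \<epsilon> :: real assume "0 < \<epsilon>"
  then obtain N1 N2 where N1: "\<forall>n\<ge>N1. s n \<in> M \<and> d (s n) x < \<epsilon> / 2"
    and N2: "\<forall>n\<ge>N2. t n \<in> M \<and> d (t n) y < \<epsilon> / 2"
    using s t unfolding limit_metric_sequentially by (metis half_gt_zero)
  have "norm (d (s n) (t n) - d x y) < \<epsilon>" if "max N1 N2 \<le> n" for n
  proof -
    have "\<bar>d (s n) (t n) - d x y\<bar> \<le> d (s n) x + d (t n) y"
      using N1 N2 that s t limitin_mspace by (intro mdist_diff_le) auto
    moreover have "d (s n) x < \<epsilon> / 2" "d (t n) y < \<epsilon> / 2"
      using N1 N2 that by auto
    ultimately show ?thesis
      by simp
  qed
  then show "\<exists>N. \<forall>n\<ge>N. norm (d (s n) (t n) - d x y) < \<epsilon>"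
    by blast
qed

lemma (in Metric_space) mdist_le_geometric:
  assumes "range s \<subseteq> M" and step: "\<And>n. d (s n) (s (Suc n)) \<le> C * (1/2) ^ n" and "k \<le> l"
  shows "d (s k) (s l) \<le> 2 * C * ((1/2) ^ k - (1/2) ^ l)"
  using \<open>k \<le> l\<close>
proof (induction l)
  case (Suc l)
  show ?case
  proof (cases "k = Suc l")
    case False
    then have "d (s k) (s (Suc l)) \<le> d (s k) (s l) + d (s l) (s (Suc l))"
      using assms(1) by (intro triangle) auto
    also have "\<dots> \<le> 2 * C * ((1/2) ^ k - (1/2) ^ l) + C * (1/2) ^ l"
      using Suc False step[of l] by simp
    finally show ?thesis
      by (simp add: algebra_simps)
  qed (use assms(1) in \<open>auto simp: range_subsetD\<close>)
qed (use assms(1) in \<open>auto simp: range_subsetD\<close>)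

lemma (in Metric_space) MCauchy_geometric:
  assumes "range s \<subseteq> M" and step: "\<And>n. d (s n) (s (Suc n)) \<le> C * (1/2) ^ n"
  shows "MCauchy s"
  unfolding MCauchy_def
proof (intro conjI assms(1) allI impI)
  fix \<epsilon> :: real assume "0 < \<epsilon>"
  have C: "0 \<le> C"
    using order_trans[OF nonneg step[of 0]] by simp
  then obtain K where K: "(1/2::real) ^ K < \<epsilon> / (2 * C + 1)"
    using real_arch_pow_inv[of "\<epsilon> / (2 * C + 1)" "1/2"] \<open>0 < \<epsilon>\<close> by auto
  have main: "d (s k) (s l) < \<epsilon>" if "K \<le> k" "k \<le> l" for k l
  proof -
    have "0 \<le> 2 * C * (1/2) ^ l"
      using C by simp
    then have "d (s k) (s l) \<le> 2 * C * (1/2) ^ k"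
      using mdist_le_geometric[OF assms that(2)] by (simp add: right_diff_distrib)
    also have "\<dots> \<le> (2 * C + 1) * (1/2) ^ K"
      by (rule mult_mono) (use C that(1) in \<open>auto intro: power_decreasing\<close>)
    also have "\<dots> < \<epsilon>"
      using K C by (simp add: pos_less_divide_eq mult.commute[of "2 * C + 1"])
    finally show ?thesis .
  qed
  show "\<exists>N. \<forall>n n'. N \<le> n \<longrightarrow> N \<le> n' \<longrightarrow> d (s n) (s n') < \<epsilon>"
  proof (intro exI allI impI)
    fix n n' assume "K \<le> n" "K \<le> n'"
    then show "d (s n) (s n') < \<epsilon>"
      using main[of n n'] main[of n' n] commute[of "s n" "s n'"] by (cases "n \<le> n'") simp_all
  qed
qed

lemma (in Metric_space) separable_dense_sequence:
  assumes "separable_space mtopology" "M \<noteq> {}"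
  obtains xs :: "nat \<Rightarrow> 'a" where "range xs \<subseteq> M" "mtopology closure_of range xs = M"
proof -
  obtain C where C: "countable C" "C \<subseteq> M" "mtopology closure_of C = M"
    using assms(1) unfolding separable_space_def by auto
  then have "C \<noteq> {}"
    using assms(2) by auto
  then show thesis
    using that range_from_nat_into[OF _ C(1)] C(2,3) by metis
qed

lemma (in Metric_space) dense_approximating_sequences:
  assumes "S \<subseteq> M" "mtopology closure_of S = M"
  obtains \<sigma> where "\<And>x. x \<in> M \<Longrightarrow> range (\<sigma> x) \<subseteq> S"
    "\<And>x. x \<in> M \<Longrightarrow> limitin mtopology (\<sigma> x) x sequentially"
proof -
  have "\<exists>\<sigma>. range \<sigma> \<subseteq> S \<and> limitin mtopology \<sigma> x sequentially" if "x \<in> M" for x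
  proof -
    have "x \<in> mtopology closure_of S"
      using that assms(2) by simp
    then show ?thesis
      unfolding closure_of_sequentially by blast
  qed
  then show thesis
    using that by metis
qed

lemma MCauchy_comp_isometry:
  assumes "Metric_space M d" "Metric_space M' d'" "Metric_space.MCauchy M d \<sigma>" "range \<sigma> \<subseteq> S"
    and "f ` S \<subseteq> M'" "\<forall>x\<in>S. \<forall>y\<in>S. d' (f x) (f y) = d x y"
  shows "Metric_space.MCauchy M' d' (f \<circ> \<sigma>)"
proof -
  have "d' (f (\<sigma> n)) (f (\<sigma> n')) = d (\<sigma> n) (\<sigma> n')" for n n'
    using assms(4,6) by blast
  then show ?thesis
    using assms(3-5) unfolding Metric_space.MCauchy_def[OF assms(1)] Metric_space.MCauchy_def[OF assms(2)]
    by (auto simp: image_subset_iff)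
qed

lemma isometry_extend_from_dense:
  assumes "Metric_space M d" "Metric_space M' d'" "Metric_space.mcomplete M' d'"
    and "S \<subseteq> M" "Metric_space.mtopology M d closure_of S = M"
    and f: "f ` S \<subseteq> M'" "\<forall>x\<in>S. \<forall>y\<in>S. d' (f x) (f y) = d x y"
  shows "\<exists>g. g ` M \<subseteq> M' \<and> (\<forall>x\<in>M. \<forall>y\<in>M. d' (g x) (g y) = d x y)"
proof -
  interpret X: Metric_space M d by fact
  interpret Y: Metric_space M' d' by fact
  obtain \<sigma> where \<sigma>: "\<And>x. x \<in> M \<Longrightarrow> range (\<sigma> x) \<subseteq> S"
      "\<And>x. x \<in> M \<Longrightarrow> limitin X.mtopology (\<sigma> x) x sequentially"
    using X.dense_approximating_sequences[OF assms(4,5)] by blast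
  have "Y.MCauchy (f \<circ> \<sigma> x)" if "x \<in> M" for x
    using \<sigma>[OF that] assms(4) X.convergent_imp_MCauchy[of "\<sigma> x" x]
    by (intro MCauchy_comp_isometry[OF assms(1,2) _ _ f]) auto
  then have "\<forall>x\<in>M. \<exists>l. limitin Y.mtopology (f \<circ> \<sigma> x) l sequentially"
    using assms(3) unfolding Y.mcomplete_def by blast
  then obtain g where g: "\<And>x. x \<in> M \<Longrightarrow> limitin Y.mtopology (f \<circ> \<sigma> x) (g x) sequentially"
    by metis
  have "d' (g x) (g y) = d x y" if "x \<in> M" "y \<in> M" for x y
  proof (rule LIMSEQ_unique)
    show "(\<lambda>n. d' ((f \<circ> \<sigma> x) n) ((f \<circ> \<sigma> y) n)) \<longlonglongrightarrow> d' (g x) (g y)"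
      using Y.tendsto_mdist g that by blast
    have "d' ((f \<circ> \<sigma> x) n) ((f \<circ> \<sigma> y) n) = d (\<sigma> x n) (\<sigma> y n)" for n
      using f(2) \<sigma>(1)[OF that(1)] \<sigma>(1)[OF that(2)] by (simp add: image_subset_iff)
    then show "(\<lambda>n. d' ((f \<circ> \<sigma> x) n) ((f \<circ> \<sigma> y) n)) \<longlonglongrightarrow> d x y"
      using X.tendsto_mdist \<sigma>(2) that by presburger
  qed
  moreover have "g ` M \<subseteq> M'"
    using g Y.limitin_mspace by blast
  ultimately show ?thesis
    by blast
qed

lemma DirProd_comm_group:
  assumes "comm_group G" "comm_group H"
  shows "comm_group (G \<times>\<times> H)"
proof -
  interpret G: comm_group G by fact
  interpret H: comm_group H by fact
  show ?thesis
    by (rule group.group_comm_groupI[OF DirProd_group[OF G.is_group H.is_group]])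
      (auto simp: mult_DirProd' G.m_comm H.m_comm)
qed

lemma DirProd_nat_pow:
  assumes "monoid G" "monoid H" "a \<in> carrier G" "b \<in> carrier H"
  shows "(a, b) [^]\<^bsub>G \<times>\<times> H\<^esub> (n::nat) = (a [^]\<^bsub>G\<^esub> n, b [^]\<^bsub>H\<^esub> n)"
  by (induction n) (simp_all add: monoid.nat_pow_Suc[OF DirProd_monoid[OF assms(1,2)]])

lemma is_value_on_iso:
  assumes "g \<in> iso H A" "group H" "group A" "is_value_on A q"
  shows "is_value_on H (\<lambda>y. q (g y))"
proof -
  interpret group_hom H A g
    using assms by (simp add: group_hom_def group_hom_axioms_def iso_def)
  have "g y = \<one>\<^bsub>A\<^esub> \<longleftrightarrow> y = \<one>\<^bsub>H\<^esub>" if "y \<in> carrier H" for y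
    using assms(1) that by (metis hom_one iso_iff inj_on_def G.one_closed)
  then show ?thesis
    using is_value_onD[OF assms(4)] unfolding is_value_on_def by simp
qed

lemma finite_comm_group_iso_nat_monoid:
  assumes "comm_group A" "finite (carrier A)"
  obtains H :: "nat monoid" and h where "comm_group H" "finite (carrier H)" "h \<in> iso A H"
proof -
  interpret A: comm_group A by fact
  obtain h where h: "bij_betw h (carrier A) {0..<card (carrier A)}"
    using ex_bij_betw_finite_nat[OF assms(2)] by blast
  define H :: "nat monoid" where
    "H = \<lparr>carrier = {0..<card (carrier A)},
          mult = (\<lambda>x y. h (inv_into (carrier A) h x \<otimes>\<^bsub>A\<^esub> inv_into (carrier A) h y)),
          one = h \<one>\<^bsub>A\<^esub>\<rparr>"
  have "h \<in> iso A H"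
    using h by (auto simp: iso_def hom_def H_def bij_betw_def inv_into_f_f)
  moreover have "comm_group (H\<lparr>one := h \<one>\<^bsub>A\<^esub>\<rparr>)"
    by (rule A.iso_imp_img_comm_group[OF calculation])
  ultimately show ?thesis
    using that by (simp add: H_def)
qed

lemma G2_property_via_iso:
  fixes A :: "'b monoid" and H :: "nat monoid" and p :: "'g::ab_group_add \<Rightarrow> real"
  assumes G2: "G2_property r N p" and A: "comm_group A" and H: "comm_group H" "finite (carrier H)"
    and h: "h \<in> iso A H"
    and exp: "N \<noteq> 0 \<longrightarrow> (\<forall>x\<in>carrier A. x [^]\<^bsub>A\<^esub> N = \<one>\<^bsub>A\<^esub>)"
    and q: "is_value_on A q" "\<forall>x\<in>carrier A. ereal (q x) \<le> r"
    and K: "subgroup K A" and \<phi>: "additive_on K A \<phi>" "\<forall>x\<in>K. p (\<phi> x) = q x"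
    and \<epsilon>: "0 < \<epsilon>" "\<epsilon> < 1"
  shows "\<exists>\<psi>. additive_on (carrier H) H \<psi> \<and> (\<forall>x\<in>K. p (\<phi> x - \<psi> (h x)) \<le> \<epsilon>) \<and>
           (\<forall>x\<in>carrier A. (1 - \<epsilon>) * q x \<le> p (\<psi> (h x)) \<and> p (\<psi> (h x)) \<le> (1 + \<epsilon>) * q x)"
proof -
  interpret A: comm_group A by (fact A)
  interpret H: comm_group H by (fact H)
  interpret h: group_hom A H h
    using h by (simp add: group_hom_def group_hom_axioms_def iso_def A.is_group H.is_group)
  define g where "g = inv_into (carrier A) h"
  have g: "g \<in> iso H A"
    unfolding g_def by (rule A.iso_set_sym[OF h])
  have gh: "g (h x) = x" if "x \<in> carrier A" for x
    using h that unfolding g_def iso_def bij_betw_def by (simp add: inv_into_f_f)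
  have hg: "h (g y) = y" and g_in: "g y \<in> carrier A" if "y \<in> carrier H" for y
    using h g that unfolding g_def iso_def bij_betw_def hom_def by (auto simp: f_inv_into_f)
  have K_in: "x \<in> K \<Longrightarrow> x \<in> carrier A" for x
    using subgroup.mem_carrier[OF K] .
  have "N \<noteq> 0 \<longrightarrow> (\<forall>y\<in>carrier H. y [^]\<^bsub>H\<^esub> N = \<one>\<^bsub>H\<^esub>)"
    using exp hg g_in h.hom_nat_pow by (metis h.hom_one)
  moreover have "additive_on (h ` K) H (\<lambda>y. \<phi> (g y))"
    using \<phi>(1) K_in subgroup.m_closed[OF K] by (auto simp: additive_on_def gh simp flip: h.hom_mult)
  moreover have "subgroup (h ` K) H"
    by (rule subgroup.iso_subgroup[OF K A.is_group H.is_group h])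
  moreover have "\<forall>y\<in>h ` K. p (\<phi> (g y)) = q (g y)"
    using \<phi>(2) K_in by (auto simp: gh)
  ultimately obtain \<psi> where \<psi>: "additive_on (carrier H) H \<psi>" "\<forall>y\<in>h ` K. p (\<phi> (g y) - \<psi> y) \<le> \<epsilon>"
      "\<forall>y\<in>carrier H. (1 - \<epsilon>) * q (g y) \<le> p (\<psi> y) \<and> p (\<psi> y) \<le> (1 + \<epsilon>) * q (g y)"
    using G2[unfolded G2_property_def, rule_format, of H "\<lambda>y. q (g y)" "h ` K" "\<lambda>y. \<phi> (g y)" \<epsilon>]
      H \<epsilon> q(2) g_in is_value_on_iso[OF g H.is_group A.is_group q(1)]
    unfolding additive_on_def by blast
  have "(1 - \<epsilon>) * q x \<le> p (\<psi> (h x)) \<and> p (\<psi> (h x)) \<le> (1 + \<epsilon>) * q x" if "x \<in> carrier A" for x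
    using \<psi>(3) h.hom_closed[OF that] gh[OF that] by auto
  moreover have "p (\<phi> x - \<psi> (h x)) \<le> \<epsilon>" if "x \<in> K" for x
    using \<psi>(2) that gh[OF K_in[OF that]] by force
  ultimately show ?thesis
    using \<psi>(1) by blast
qed

lemma G2_property_finite_comm_group:
  fixes A :: "'b monoid" and p :: "'g::ab_group_add \<Rightarrow> real"
  assumes G2: "G2_property r N p" and A: "comm_group A" "finite (carrier A)"
    and exp: "N \<noteq> 0 \<longrightarrow> (\<forall>x\<in>carrier A. x [^]\<^bsub>A\<^esub> N = \<one>\<^bsub>A\<^esub>)"
    and q: "is_value_on A q" "\<forall>x\<in>carrier A. ereal (q x) \<le> r"
    and K: "subgroup K A" and \<phi>: "additive_on K A \<phi>" "\<forall>x\<in>K. p (\<phi> x) = q x"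
    and \<epsilon>: "0 < \<epsilon>" "\<epsilon> < 1"
  shows "\<exists>\<psi>. additive_on (carrier A) A \<psi> \<and> (\<forall>x\<in>K. p (\<phi> x - \<psi> x) \<le> \<epsilon>) \<and>
           (\<forall>x\<in>carrier A. (1 - \<epsilon>) * q x \<le> p (\<psi> x) \<and> p (\<psi> x) \<le> (1 + \<epsilon>) * q x)"
proof -
  obtain H :: "nat monoid" and h where H: "comm_group H" "finite (carrier H)" and h: "h \<in> iso A H"
    using finite_comm_group_iso_nat_monoid[OF A] .
  interpret h: group_hom A H h
    using h A H by (simp add: group_hom_def group_hom_axioms_def iso_def comm_group.axioms(2))
  obtain \<psi> where \<psi>: "additive_on (carrier H) H \<psi>" "\<forall>x\<in>K. p (\<phi> x - \<psi> (h x)) \<le> \<epsilon>"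
      "\<forall>x\<in>carrier A. (1 - \<epsilon>) * q x \<le> p (\<psi> (h x)) \<and> p (\<psi> (h x)) \<le> (1 + \<epsilon>) * q x"
    using G2_property_via_iso[OF G2 A(1) H h exp q K \<phi> \<epsilon>] by blast
  then have "additive_on (carrier A) A (\<lambda>x. \<psi> (h x))"
    by (auto simp: additive_on_def h.hom_mult)
  with \<psi>(2,3) show ?thesis
    by blast
qed

section \<open>Amalgamation of values\<close>

locale value_amalgam = G: comm_group G + H: comm_group H
  for G H :: "'b monoid" +
  fixes q1 q2 \<eta> :: "'b \<Rightarrow> real"
  assumes finite_G: "finite (carrier G)"
    and carrier_sub: "carrier G \<subseteq> carrier H"
    and mult_eq: "\<And>x y. x \<in> carrier G \<Longrightarrow> y \<in> carrier G \<Longrightarrow> x \<otimes>\<^bsub>G\<^esub> y = x \<otimes>\<^bsub>H\<^esub> y"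
    and one_eq: "\<one>\<^bsub>G\<^esub> = \<one>\<^bsub>H\<^esub>"
    and value_q1: "is_value_on G q1" and value_q2: "is_value_on H q2"
    and value_\<eta>: "is_value_on G \<eta>"
    and q1_le: "\<And>c. c \<in> carrier G \<Longrightarrow> q1 c \<le> q2 c + \<eta> c"
    and q2_le: "\<And>c. c \<in> carrier G \<Longrightarrow> q2 c \<le> q1 c + \<eta> c"
begin

text \<open>The inf-convolution below is the largest value on \<open>G \<times> H\<close> restricting to \<open>q1\<close> and
  \<open>q2\<close> on the two factors under which \<open>(c\<inverse>, c)\<close> has size at most \<open>\<eta> c\<close>.\<close>

definition cost :: "'b \<Rightarrow> 'b \<Rightarrow> 'b \<Rightarrow> real" where
  "cost a b c = q1 (a \<otimes>\<^bsub>G\<^esub> inv\<^bsub>G\<^esub> c) + q2 (b \<otimes>\<^bsub>H\<^esub> c) + \<eta> c"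

definition amalgam :: "'b \<times> 'b \<Rightarrow> real" where
  "amalgam x = Min (cost (fst x) (snd x) ` carrier G)"

lemmas q1D = is_value_onD[OF value_q1] and q2D = is_value_onD[OF value_q2]
  and \<eta>D = is_value_onD[OF value_\<eta>]

lemma values_one: "q1 \<one>\<^bsub>G\<^esub> = 0" "q2 \<one>\<^bsub>H\<^esub> = 0" "\<eta> \<one>\<^bsub>G\<^esub> = 0"
  by (simp_all add: q1D(2) q2D(2) \<eta>D(2))

lemma in_H: "c \<in> carrier G \<Longrightarrow> c \<in> carrier H"
  using carrier_sub by blast

lemma inv_eq: "c \<in> carrier G \<Longrightarrow> inv\<^bsub>H\<^esub> c = inv\<^bsub>G\<^esub> c"
  by (metis G.inv_closed G.l_inv H.inv_equality in_H mult_eq one_eq)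

lemma amalgam_le_cost: "c \<in> carrier G \<Longrightarrow> amalgam (a, b) \<le> cost a b c"
  unfolding amalgam_def using finite_G by (intro Min_le) auto

lemma amalgam_attained:
  obtains c where "c \<in> carrier G" "amalgam (a, b) = cost a b c"
proof -
  have "amalgam (a, b) \<in> cost a b ` carrier G"
    unfolding amalgam_def fst_conv snd_conv using finite_G G.one_closed by (intro Min_in) auto
  then show thesis
    using that by auto
qed

lemma cost_nonneg:
  "a \<in> carrier G \<Longrightarrow> b \<in> carrier H \<Longrightarrow> c \<in> carrier G \<Longrightarrow> 0 \<le> cost a b c"
  unfolding cost_def by (simp add: q1D(1) q2D(1) \<eta>D(1) in_H)

lemma amalgam_fst:
  assumes a: "a \<in> carrier G"
  shows "amalgam (a, \<one>\<^bsub>H\<^esub>) = q1 a"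
proof (rule antisym)
  show "amalgam (a, \<one>\<^bsub>H\<^esub>) \<le> q1 a"
    using amalgam_le_cost[OF G.one_closed, of a "\<one>\<^bsub>H\<^esub>"] a
    by (simp add: cost_def values_one, simp add: one_eq values_one)
  obtain c where c: "c \<in> carrier G" "amalgam (a, \<one>\<^bsub>H\<^esub>) = cost a \<one>\<^bsub>H\<^esub> c"
    by (rule amalgam_attained)
  have "q1 a = q1 ((a \<otimes>\<^bsub>G\<^esub> inv\<^bsub>G\<^esub> c) \<otimes>\<^bsub>G\<^esub> c)"
    using a c(1) by (simp add: G.m_assoc)
  also have "\<dots> \<le> q1 (a \<otimes>\<^bsub>G\<^esub> inv\<^bsub>G\<^esub> c) + q2 c + \<eta> c"
    using q1D(4)[of "a \<otimes>\<^bsub>G\<^esub> inv\<^bsub>G\<^esub> c" c] q1_le[OF c(1)] a c(1) by simp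
  finally show "q1 a \<le> amalgam (a, \<one>\<^bsub>H\<^esub>)"
    using c in_H by (simp add: cost_def)
qed

lemma amalgam_snd:
  assumes b: "b \<in> carrier H"
  shows "amalgam (\<one>\<^bsub>G\<^esub>, b) = q2 b"
proof (rule antisym)
  show "amalgam (\<one>\<^bsub>G\<^esub>, b) \<le> q2 b"
    using amalgam_le_cost[OF G.one_closed, of "\<one>\<^bsub>G\<^esub>" b] b
    by (simp add: cost_def values_one, simp add: one_eq)
  obtain c where c: "c \<in> carrier G" "amalgam (\<one>\<^bsub>G\<^esub>, b) = cost \<one>\<^bsub>G\<^esub> b c"
    by (rule amalgam_attained)
  have "q2 b = q2 ((b \<otimes>\<^bsub>H\<^esub> c) \<otimes>\<^bsub>H\<^esub> inv\<^bsub>H\<^esub> c)"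
    using b in_H[OF c(1)] by (simp add: H.m_assoc)
  also have "\<dots> \<le> q2 (b \<otimes>\<^bsub>H\<^esub> c) + q1 c + \<eta> c"
    using q2D(4)[of "b \<otimes>\<^bsub>H\<^esub> c" "inv\<^bsub>H\<^esub> c"] q2D(3)[of c] q2_le[OF c(1)] b in_H[OF c(1)] by simp
  finally show "q2 b \<le> amalgam (\<one>\<^bsub>G\<^esub>, b)"
    using c by (simp add: cost_def q1D(3))
qed

lemma amalgam_inv_diag:
  assumes "c \<in> carrier G"
  shows "amalgam (inv\<^bsub>G\<^esub> c, c) \<le> \<eta> c"
proof -
  have "c \<otimes>\<^bsub>H\<^esub> inv\<^bsub>G\<^esub> c = \<one>\<^bsub>H\<^esub>"
    using assms by (simp flip: mult_eq one_eq)
  then show ?thesis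
    using amalgam_le_cost[OF G.inv_closed[OF assms], of "inv\<^bsub>G\<^esub> c" c] assms
    by (simp add: cost_def values_one \<eta>D(3))
qed

lemma amalgam_eq_0_iff:
  assumes "a \<in> carrier G" "b \<in> carrier H"
  shows "amalgam (a, b) = 0 \<longleftrightarrow> a = \<one>\<^bsub>G\<^esub> \<and> b = \<one>\<^bsub>H\<^esub>"
proof
  assume "amalgam (a, b) = 0"
  then obtain c where c: "c \<in> carrier G" "cost a b c = 0"
    by (metis amalgam_attained)
  then have "q1 (a \<otimes>\<^bsub>G\<^esub> inv\<^bsub>G\<^esub> c) = 0" "q2 (b \<otimes>\<^bsub>H\<^esub> c) = 0" "\<eta> c = 0"
    using assms q1D(1)[of "a \<otimes>\<^bsub>G\<^esub> inv\<^bsub>G\<^esub> c"] q2D(1)[of "b \<otimes>\<^bsub>H\<^esub> c"] \<eta>D(1)[of c] in_H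
    unfolding cost_def by (smt (verit) G.inv_closed G.m_closed H.m_closed)+
  then have "c = \<one>\<^bsub>G\<^esub>" "a \<otimes>\<^bsub>G\<^esub> inv\<^bsub>G\<^esub> c = \<one>\<^bsub>G\<^esub>" "b \<otimes>\<^bsub>H\<^esub> c = \<one>\<^bsub>H\<^esub>"
    using assms c(1) in_H by (simp_all add: q1D(2) q2D(2) \<eta>D(2))
  then show "a = \<one>\<^bsub>G\<^esub> \<and> b = \<one>\<^bsub>H\<^esub>"
    using assms by (simp, simp add: one_eq)
qed (simp add: amalgam_fst values_one)

lemma amalgam_inv_le:
  assumes "a \<in> carrier G" "b \<in> carrier H"
  shows "amalgam (inv\<^bsub>G\<^esub> a, inv\<^bsub>H\<^esub> b) \<le> amalgam (a, b)"
proof -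
  obtain c where c: "c \<in> carrier G" "amalgam (a, b) = cost a b c"
    by (rule amalgam_attained)
  have "inv\<^bsub>G\<^esub> a \<otimes>\<^bsub>G\<^esub> inv\<^bsub>G\<^esub> (inv\<^bsub>G\<^esub> c) = inv\<^bsub>G\<^esub> (a \<otimes>\<^bsub>G\<^esub> inv\<^bsub>G\<^esub> c)"
    using assms(1) c(1) by (simp add: G.inv_mult G.m_comm)
  moreover have "inv\<^bsub>H\<^esub> b \<otimes>\<^bsub>H\<^esub> inv\<^bsub>G\<^esub> c = inv\<^bsub>H\<^esub> (b \<otimes>\<^bsub>H\<^esub> c)"
    using assms(2) in_H[OF c(1)] by (simp add: H.inv_mult inv_eq[OF c(1), symmetric])
  ultimately have "cost (inv\<^bsub>G\<^esub> a) (inv\<^bsub>H\<^esub> b) (inv\<^bsub>G\<^esub> c) = cost a b c"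
    using assms c(1) in_H by (simp add: cost_def q1D(3) q2D(3) \<eta>D(3))
  then show ?thesis
    using amalgam_le_cost[OF G.inv_closed[OF c(1)]] c(2) by metis
qed

lemma amalgam_mult_le:
  assumes "a \<in> carrier G" "b \<in> carrier H" "a' \<in> carrier G" "b' \<in> carrier H"
  shows "amalgam (a \<otimes>\<^bsub>G\<^esub> a', b \<otimes>\<^bsub>H\<^esub> b') \<le> amalgam (a, b) + amalgam (a', b')"
proof -
  obtain c where c: "c \<in> carrier G" "amalgam (a, b) = cost a b c"
    by (rule amalgam_attained)
  obtain c' where c': "c' \<in> carrier G" "amalgam (a', b') = cost a' b' c'"
    by (rule amalgam_attained)
  have "(a \<otimes>\<^bsub>G\<^esub> a') \<otimes>\<^bsub>G\<^esub> inv\<^bsub>G\<^esub> (c \<otimes>\<^bsub>G\<^esub> c') =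
        (a \<otimes>\<^bsub>G\<^esub> inv\<^bsub>G\<^esub> c) \<otimes>\<^bsub>G\<^esub> (a' \<otimes>\<^bsub>G\<^esub> inv\<^bsub>G\<^esub> c')"
    using assms c c' by (simp add: G.inv_mult G.m_ac)
  moreover have "(b \<otimes>\<^bsub>H\<^esub> b') \<otimes>\<^bsub>H\<^esub> (c \<otimes>\<^bsub>G\<^esub> c') = (b \<otimes>\<^bsub>H\<^esub> c) \<otimes>\<^bsub>H\<^esub> (b' \<otimes>\<^bsub>H\<^esub> c')"
    using assms in_H c c' by (simp add: mult_eq H.m_ac)
  ultimately have "cost (a \<otimes>\<^bsub>G\<^esub> a') (b \<otimes>\<^bsub>H\<^esub> b') (c \<otimes>\<^bsub>G\<^esub> c') \<le> cost a b c + cost a' b' c'"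
    using assms c c' in_H q1D(4) q2D(4) \<eta>D(4)[OF c(1) c'(1)] unfolding cost_def
    by (smt (verit) G.inv_closed G.m_closed H.m_closed)
  then show ?thesis
    using amalgam_le_cost[OF G.m_closed[OF c(1) c'(1)]] c c' by (smt (verit))
qed

lemma is_value_on_amalgam: "is_value_on (G \<times>\<times> H) amalgam"
  unfolding is_value_on_def
proof (intro conjI ballI)
  fix x assume "x \<in> carrier (G \<times>\<times> H)"
  then obtain a b where x: "x = (a, b)" "a \<in> carrier G" "b \<in> carrier H"
    by auto
  show "0 \<le> amalgam x"
    using amalgam_attained cost_nonneg x by metis
  show "amalgam x = 0 \<longleftrightarrow> x = \<one>\<^bsub>G \<times>\<times> H\<^esub>"
    using amalgam_eq_0_iff x by simp
  show "amalgam (inv\<^bsub>G \<times>\<times> H\<^esub> x) = amalgam x"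
    using amalgam_inv_le[of a b] amalgam_inv_le[of "inv\<^bsub>G\<^esub> a" "inv\<^bsub>H\<^esub> b"] x
    by (simp add: inv_DirProd[OF G.is_group H.is_group])
next
  fix x y assume "x \<in> carrier (G \<times>\<times> H)" "y \<in> carrier (G \<times>\<times> H)"
  then show "amalgam (x \<otimes>\<^bsub>G \<times>\<times> H\<^esub> y) \<le> amalgam x + amalgam y"
    using amalgam_mult_le by (auto simp: mult_DirProd')
qed

end

section \<open>Vectors over \<open>\<int>/m\<close> and step functions\<close>

definition Zmod_vec :: "nat \<Rightarrow> nat \<Rightarrow> (nat \<Rightarrow> int) monoid" where
  "Zmod_vec m n = \<lparr>carrier = {c. (\<forall>a. 0 \<le> c a \<and> c a < int m) \<and> (\<forall>a>n. c a = 0)},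
                   mult = (\<lambda>c c' a. (c a + c' a) mod int m), one = (\<lambda>a. 0)\<rparr>"

lemma Zmod_vec_simps [simp]:
  "carrier (Zmod_vec m n) = {c. (\<forall>a. 0 \<le> c a \<and> c a < int m) \<and> (\<forall>a>n. c a = 0)}"
  "c \<otimes>\<^bsub>Zmod_vec m n\<^esub> c' = (\<lambda>a. (c a + c' a) mod int m)"
  "\<one>\<^bsub>Zmod_vec m n\<^esub> = (\<lambda>a. 0)"
  by (simp_all add: Zmod_vec_def)

lemma comm_group_Zmod_vec:
  assumes "1 \<le> m" shows "comm_group (Zmod_vec m n)"
proof (rule comm_groupI)
  fix x assume x: "x \<in> carrier (Zmod_vec m n)"
  show "\<exists>y\<in>carrier (Zmod_vec m n). y \<otimes>\<^bsub>Zmod_vec m n\<^esub> x = \<one>\<^bsub>Zmod_vec m n\<^esub>"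
    using x assms by (intro bexI[of _ "\<lambda>a. (- x a) mod int m"]) (auto simp: mod_add_left_eq)
qed (use assms in \<open>auto simp: mod_add_left_eq mod_add_right_eq add_ac\<close>)

lemma Zmod_vec_inv:
  assumes "1 \<le> m" "x \<in> carrier (Zmod_vec m n)"
  shows "inv\<^bsub>Zmod_vec m n\<^esub> x = (\<lambda>a. (- x a) mod int m)"
proof -
  interpret comm_group "Zmod_vec m n" by (rule comm_group_Zmod_vec[OF assms(1)])
  show ?thesis
    by (rule inv_equality) (use assms in \<open>simp_all add: mod_add_left_eq\<close>)
qed

lemma Zmod_vec_exponent:
  assumes "1 \<le> m" "x \<in> carrier (Zmod_vec m n)"
  shows "x [^]\<^bsub>Zmod_vec m n\<^esub> m = \<one>\<^bsub>Zmod_vec m n\<^esub>"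
proof -
  have "x [^]\<^bsub>Zmod_vec m n\<^esub> k = (\<lambda>a. (int k * x a) mod int m)" for k
  proof (induction k)
    case (Suc k)
    interpret comm_group "Zmod_vec m n" by (rule comm_group_Zmod_vec[OF assms(1)])
    show ?case
      using Suc assms(2) by (simp add: mod_add_right_eq distrib_right add.commute)
  qed simp
  then show ?thesis
    by simp
qed

lemma finite_Zmod_vec: "finite (carrier (Zmod_vec m n))"
proof (rule finite_subset)
  show "carrier (Zmod_vec m n) \<subseteq>
      {c. \<forall>a. (a \<in> {..n} \<longrightarrow> c a \<in> {0..<int m}) \<and> (a \<notin> {..n} \<longrightarrow> c a = 0)}"
    by auto
qed (rule finite_set_of_finite_funs; simp)

lemma Zmod_vec_mono: "n \<le> n' \<Longrightarrow> carrier (Zmod_vec m n) \<subseteq> carrier (Zmod_vec m n')"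
  by auto

definition signed_ind :: "real \<Rightarrow> real \<Rightarrow> int" where
  "signed_ind t x = (if x < t then 1 else 0) - (if x < 0 then 1 else 0)"

definition coeff_support :: "(nat \<Rightarrow> int) \<Rightarrow> nat set" where
  "coeff_support c = {a. c a \<noteq> 0}"

text \<open>On \<open>c = e\<^sub>a - e\<^sub>b\<close> the step function below is \<open>\<pm>\<close> the indicator of the interval between
  \<open>w a\<close> and \<open>w b\<close>, so \<open>mod_length m w\<close> measures \<open>\<bar>w a - w b\<bar>\<close> (see \<open>mod_length_pair\<close>).\<close>

definition mod_support :: "nat \<Rightarrow> (nat \<Rightarrow> real) \<Rightarrow> (nat \<Rightarrow> int) \<Rightarrow> real set" where
  "mod_support m w c = {x. (\<Sum>a\<in>coeff_support c. c a * signed_ind (w a) x) mod int m \<noteq> 0}"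

definition mod_length :: "nat \<Rightarrow> (nat \<Rightarrow> real) \<Rightarrow> (nat \<Rightarrow> int) \<Rightarrow> real" where
  "mod_length m w c = measure lborel (mod_support m w c)"

lemma mod_support_eq_sum:
  assumes "finite F" "coeff_support c \<subseteq> F"
  shows "mod_support m w c = {x. (\<Sum>a\<in>F. c a * signed_ind (w a) x) mod int m \<noteq> 0}"
proof -
  have "(\<Sum>a\<in>coeff_support c. c a * signed_ind (w a) x) = (\<Sum>a\<in>F. c a * signed_ind (w a) x)" for x
    by (rule sum.mono_neutral_left) (use assms in \<open>auto simp: coeff_support_def\<close>)
  then show ?thesis
    unfolding mod_support_def by simp
qed

lemma sum_mod_mult_eq:
  fixes f g :: "nat \<Rightarrow> int"
  shows "(\<Sum>a\<in>F. (f a mod k) * g a) mod k = (\<Sum>a\<in>F. f a * g a) mod k"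
proof -
  have "(\<Sum>a\<in>F. (f a mod k) * g a) mod k = (\<Sum>a\<in>F. ((f a mod k) * g a) mod k) mod k"
    by (simp add: mod_sum_eq)
  also have "\<dots> = (\<Sum>a\<in>F. (f a * g a) mod k) mod k"
    by (simp add: mod_mult_left_eq)
  finally show ?thesis
    by (simp add: mod_sum_eq)
qed

lemma mod_support_cong:
  assumes "finite (coeff_support c)" "finite (coeff_support c')"
    and "\<And>a. c a mod int m = c' a mod int m"
  shows "mod_support m w c = mod_support m w c'"
proof -
  let ?F = "coeff_support c \<union> coeff_support c'"
  have "(\<Sum>a\<in>?F. c a * signed_ind (w a) x) mod int m = (\<Sum>a\<in>?F. c' a * signed_ind (w a) x) mod int m" for x
    using sum_mod_mult_eq[of c "int m" "\<lambda>a. signed_ind (w a) x" ?F]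
      sum_mod_mult_eq[of c' "int m" "\<lambda>a. signed_ind (w a) x" ?F] by (simp add: assms(3))
  then show ?thesis
    using mod_support_eq_sum[of ?F c] mod_support_eq_sum[of ?F c'] assms(1,2) by auto
qed

lemma mod_support_borel:
  assumes "finite (coeff_support c)"
  shows "mod_support m w c \<in> sets borel"
proof -
  have "(\<Sum>a\<in>coeff_support c. real_of_int (c a) * (indicator {..<w a} x - indicator {..<0} x)) =
      real_of_int (\<Sum>a\<in>coeff_support c. c a * signed_ind (w a) x)" for x
    by (auto simp: signed_ind_def indicator_def of_int_sum intro!: sum.cong)
  then have eq: "mod_support m w c = {x. \<lfloor>\<Sum>a\<in>coeff_support c.
      real_of_int (c a) * (indicator {..<w a} x - indicator {..<0} x)\<rfloor> mod int m \<noteq> 0}"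
    unfolding mod_support_def by (simp only: floor_of_int)
  show ?thesis
    unfolding eq by measurable
qed

lemma mod_support_subset:
  assumes "finite F" "coeff_support c \<subseteq> F" "\<forall>a\<in>F. \<bar>w a\<bar> \<le> R"
  shows "mod_support m w c \<subseteq> {-R..<R}"
proof
  fix x assume x: "x \<in> mod_support m w c"
  show "x \<in> {-R..<R}"
  proof (rule ccontr)
    assume "x \<notin> {-R..<R}"
    then have "\<forall>a\<in>F. signed_ind (w a) x = 0"
      using assms(3) by (auto simp: signed_ind_def abs_le_iff)
    then show False
      using x mod_support_eq_sum[OF assms(1,2)] by simp
  qed
qed

lemma mod_support_fmeasurable:
  assumes "finite (coeff_support c)"
  shows "mod_support m w c \<in> fmeasurable lborel"
proof (rule fmeasurableI2)
  let ?R = "\<Sum>a\<in>coeff_support c. \<bar>w a\<bar>"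
  show "mod_support m w c \<subseteq> {-?R..<?R}"
    using assms by (intro mod_support_subset[OF assms order_refl] ballI member_le_sum) auto
  show "{-?R..<?R} \<in> fmeasurable lborel"
    using sum_nonneg[of _ "\<lambda>a. \<bar>w a\<bar>"] by (simp add: fmeasurable_def emeasure_lborel_Ico)
qed (use assms mod_support_borel in auto)

lemma mod_length_le:
  assumes "finite F" "coeff_support c \<subseteq> F" "\<forall>a\<in>F. \<bar>w a\<bar> \<le> R" "0 \<le> R"
  shows "mod_length m w c \<le> 2 * R"
proof -
  have "mod_length m w c \<le> measure lborel {-R..<R}"
    unfolding mod_length_def
    using mod_support_subset[OF assms(1-3)] mod_support_borel finite_subset[OF assms(2,1)] assms(4)
    by (intro measure_mono_fmeasurable) (auto simp: fmeasurable_def emeasure_lborel_Ico)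
  then show ?thesis
    using assms(4) by simp
qed

lemma mod_support_add_subset:
  assumes "finite (coeff_support c)" "finite (coeff_support c')"
  shows "mod_support m w (\<lambda>a. (c a + c' a) mod int m) \<subseteq> mod_support m w c \<union> mod_support m w c'"
proof
  let ?F = "coeff_support c \<union> coeff_support c'"
  let ?s = "\<lambda>c x. \<Sum>a\<in>?F. c a * signed_ind (w a) x"
  have F: "finite ?F" "coeff_support (\<lambda>a. (c a + c' a) mod int m) \<subseteq> ?F"
    using assms by (auto simp: coeff_support_def)
  fix x assume "x \<in> mod_support m w (\<lambda>a. (c a + c' a) mod int m)"
  then have "(\<Sum>a\<in>?F. ((c a + c' a) mod int m) * signed_ind (w a) x) mod int m \<noteq> 0"
    using mod_support_eq_sum[OF F] by simp
  then have "(?s c x + ?s c' x) mod int m \<noteq> 0"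
    by (simp add: sum_mod_mult_eq distrib_right sum.distrib)
  then have "?s c x mod int m \<noteq> 0 \<or> ?s c' x mod int m \<noteq> 0"
    by (auto simp flip: dvd_eq_mod_eq_0)
  then show "x \<in> mod_support m w c \<union> mod_support m w c'"
    using F(1) mod_support_eq_sum[of ?F c] mod_support_eq_sum[of ?F c'] by auto
qed

lemma mod_length_add_le:
  assumes "finite (coeff_support c)" "finite (coeff_support c')"
  shows "mod_length m w (\<lambda>a. (c a + c' a) mod int m) \<le> mod_length m w c + mod_length m w c'"
proof -
  have "finite (coeff_support (\<lambda>a. (c a + c' a) mod int m))"
    by (rule finite_subset[of _ "coeff_support c \<union> coeff_support c'"])
      (use assms in \<open>auto simp: coeff_support_def\<close>)
  then have "mod_length m w (\<lambda>a. (c a + c' a) mod int m) \<le> measure lborel (mod_support m w c \<union> mod_support m w c')"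
    unfolding mod_length_def using assms mod_support_add_subset[OF assms] mod_support_fmeasurable mod_support_borel
    by (intro measure_mono_fmeasurable) (auto intro: fmeasurable.Un)
  also have "\<dots> \<le> mod_length m w c + mod_length m w c'"
    unfolding mod_length_def using assms mod_support_borel by (intro measure_Un_le) auto
  finally show ?thesis .
qed

lemma mod_support_uminus:
  assumes "finite (coeff_support c)"
  shows "mod_support m w (\<lambda>a. (- c a) mod int m) = mod_support m w c"
proof -
  have F: "coeff_support (\<lambda>a. (- c a) mod int m) \<subseteq> coeff_support c"
    by (auto simp: coeff_support_def)
  have "(\<Sum>a\<in>coeff_support c. (- c a) mod int m * signed_ind (w a) x) mod int m =
      (- (\<Sum>a\<in>coeff_support c. c a * signed_ind (w a) x)) mod int m" for x
    by (simp add: sum_mod_mult_eq sum_negf)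
  then have "(\<Sum>a\<in>coeff_support c. (- c a) mod int m * signed_ind (w a) x) mod int m = 0 \<longleftrightarrow>
      (\<Sum>a\<in>coeff_support c. c a * signed_ind (w a) x) mod int m = 0" for x
    by (simp flip: dvd_eq_mod_eq_0)
  then show ?thesis
    using mod_support_eq_sum[OF assms F] unfolding mod_support_def by auto
qed

lemma mod_support_zero: "mod_support m w (\<lambda>a. 0) = {}"
  by (simp add: mod_support_def coeff_support_def)

lemma mod_length_pair:
  assumes "a \<noteq> b" "2 \<le> m"
  shows "mod_length m w (\<lambda>x. (if x = a then 1 else 0) - (if x = b then 1 else 0)) = \<bar>w a - w b\<bar>"
proof -
  let ?c = "\<lambda>x. (if x = a then 1 else 0) - (if x = b then 1 else (0::int))"
  have "(\<Sum>y\<in>{a,b}. ?c y * signed_ind (w y) x) = (if x < w a then 1 else 0) - (if x < w b then 1 else 0)" for x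
    using assms(1) by (simp add: signed_ind_def)
  moreover have "((if x < w a then 1 else 0) - (if x < w b then 1 else 0) :: int) mod int m \<noteq> 0
      \<longleftrightarrow> (x < w a) \<noteq> (x < w b)" for x
    using assms(2) by (auto simp: zmod_minus1)
  ultimately have "mod_support m w ?c = {min (w a) (w b)..<max (w a) (w b)}"
    by (subst mod_support_eq_sum[of "{a, b}"]) (auto simp: coeff_support_def min_def max_def)
  then show ?thesis
    unfolding mod_length_def by simp
qed

section \<open>Values induced by a pseudometric on \<open>\<nat>\<close>\<close>

definition unit_vec :: "nat \<Rightarrow> nat \<Rightarrow> int" where
  "unit_vec a = (\<lambda>x. if x = a then 1 else 0)"

definition nonzero_ind :: "(nat \<Rightarrow> int) \<Rightarrow> real" where
  "nonzero_ind c = (if c = (\<lambda>a. 0) then 0 else 1)"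

locale pseudometric_values =
  fixes D :: "nat \<Rightarrow> nat \<Rightarrow> real" and m :: nat and r :: ereal
  assumes D_self: "D a a = 0" and D_sym: "D a b = D b a"
    and D_triangle: "D a c \<le> D a b + D b c"
    and D_le_r: "ereal (D a b) \<le> r" and r_cases: "r = 1 \<or> r = \<infinity>"
    and m_ge_2: "2 \<le> m"
begin

abbreviation Z :: "nat \<Rightarrow> (nat \<Rightarrow> int) monoid" where
  "Z n \<equiv> Zmod_vec m n"

definition kuratowski :: "nat \<Rightarrow> nat \<Rightarrow> real" where
  "kuratowski i a = D a i - D 0 i"

definition sup_length :: "(nat \<Rightarrow> int) \<Rightarrow> real" where
  "sup_length c = (SUP i. mod_length m (kuratowski i) c)"

definition length_value :: "(nat \<Rightarrow> int) \<Rightarrow> real" where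
  "length_value c = clip r (sup_length c)"

text \<open>\<open>length_value\<close> vanishes on \<open>e\<^sub>a - e\<^sub>b\<close> whenever \<open>D a b = 0\<close>, so it is only a pseudo-value;
  the summand \<open>\<delta> * nonzero_ind c\<close> turns it into a value.\<close>

definition mixed_value :: "real \<Rightarrow> (nat \<Rightarrow> int) \<Rightarrow> real" where
  "mixed_value \<delta> c = (1 - \<delta>) * length_value c + \<delta> * nonzero_ind c"

lemma D_nonneg: "0 \<le> D a b"
  using D_triangle[of a a b] D_self[of a] D_sym[of a b] by simp

lemma kuratowski_bound: "\<bar>kuratowski i a\<bar> \<le> D a 0"
  using D_triangle[of a i 0] D_triangle[of 0 i a] D_sym[of 0 a]
  unfolding kuratowski_def by (simp add: abs_le_iff)

lemma kuratowski_lipschitz: "\<bar>kuratowski i a - kuratowski i b\<bar> \<le> D a b"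
  using D_triangle[of a i b] D_triangle[of b i a] D_sym[of b a]
  unfolding kuratowski_def by (simp add: abs_le_iff)

lemma comm_group_Z: "comm_group (Z n)"
  using comm_group_Zmod_vec m_ge_2 by simp

lemma group_Z: "group (Z n)"
  using comm_group_Z comm_group.axioms(2) by blast

lemma finite_coeff_support_Z: "c \<in> carrier (Z n) \<Longrightarrow> finite (coeff_support c)"
  by (rule finite_subset[of _ "{..n}"]) (auto simp: coeff_support_def)

lemma unit_vec_in_Z: "a \<le> n \<Longrightarrow> unit_vec a \<in> carrier (Z n)"
  using m_ge_2 by (auto simp: unit_vec_def)

lemma mod_length_kuratowski_le:
  assumes "c \<in> carrier (Z n)"
  shows "mod_length m (kuratowski i) c \<le> 2 * (\<Sum>a\<le>n. D a 0)"
proof (rule mod_length_le)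
  show "\<forall>a\<in>{..n}. \<bar>kuratowski i a\<bar> \<le> (\<Sum>a\<le>n. D a 0)"
    using kuratowski_bound D_nonneg by (meson finite_atMost member_le_sum order_trans)
qed (use assms D_nonneg in \<open>auto simp: coeff_support_def sum_nonneg\<close>)

lemma sup_length_ge: "c \<in> carrier (Z n) \<Longrightarrow> mod_length m (kuratowski i) c \<le> sup_length c"
  unfolding sup_length_def using mod_length_kuratowski_le
  by (intro cSUP_upper bdd_aboveI2) auto

lemma sup_length_le: "(\<And>i. mod_length m (kuratowski i) c \<le> K) \<Longrightarrow> sup_length c \<le> K"
  unfolding sup_length_def by (rule cSUP_least) auto

lemma pvalue_sup_length: "is_pvalue_on (Z n) sup_length"
  unfolding is_pvalue_on_def
proof (intro conjI ballI)
  fix c assume c: "c \<in> carrier (Z n)"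
  show "0 \<le> sup_length c"
    using sup_length_ge[OF c, of 0] measure_nonneg[of lborel] unfolding mod_length_def
    by (meson order_trans)
  show "sup_length (inv\<^bsub>Z n\<^esub> c) = sup_length c"
    using Zmod_vec_inv[OF _ c] m_ge_2 mod_support_uminus[OF finite_coeff_support_Z[OF c]]
    by (simp add: sup_length_def mod_length_def)
next
  fix c c' assume c: "c \<in> carrier (Z n)" and c': "c' \<in> carrier (Z n)"
  have "mod_length m (kuratowski i) (c \<otimes>\<^bsub>Z n\<^esub> c') \<le> sup_length c + sup_length c'" for i
    using mod_length_add_le[OF finite_coeff_support_Z[OF c] finite_coeff_support_Z[OF c'], of m "kuratowski i"]
      sup_length_ge[OF c, of i] sup_length_ge[OF c', of i]
    by simp
  then show "sup_length (c \<otimes>\<^bsub>Z n\<^esub> c') \<le> sup_length c + sup_length c'"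
    by (rule sup_length_le)
qed (simp add: sup_length_def mod_length_def mod_support_zero)

lemma pvalue_length_value: "is_pvalue_on (Z n) length_value"
  unfolding length_value_def by (rule pvalue_clip[OF pvalue_sup_length])

lemma length_value_nonneg: "c \<in> carrier (Z n) \<Longrightarrow> 0 \<le> length_value c"
  using pvalue_length_value unfolding is_pvalue_on_def by blast

lemma unit_vec_diff:
  assumes "a \<le> n" "b \<le> n"
  shows "unit_vec a \<otimes>\<^bsub>Z n\<^esub> inv\<^bsub>Z n\<^esub> unit_vec b = (\<lambda>x. ((if x = a then 1 else 0) - (if x = b then 1 else 0)) mod int m)"
  using Zmod_vec_inv[OF _ unit_vec_in_Z[OF assms(2)]] m_ge_2
  by (auto simp: unit_vec_def mod_add_right_eq)

lemma sup_length_unit_vec_diff: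
  assumes "a \<le> n" "b \<le> n"
  shows "sup_length (unit_vec a \<otimes>\<^bsub>Z n\<^esub> inv\<^bsub>Z n\<^esub> unit_vec b) = D a b"
proof (cases "a = b")
  case True
  then show ?thesis
    using pvalue_sup_length group.r_inv[OF group_Z unit_vec_in_Z[OF assms(2)]] D_self
    unfolding is_pvalue_on_def by simp
next
  case False
  let ?d = "\<lambda>x. (if x = a then 1 else 0) - (if x = b then 1 else (0::int))"
  have "finite (coeff_support (\<lambda>x. ?d x mod int m))" "finite (coeff_support ?d)"
    by (auto simp: coeff_support_def intro: finite_subset[of _ "{a, b}"])
  then have "mod_length m (kuratowski i) (\<lambda>x. ?d x mod int m) = \<bar>kuratowski i a - kuratowski i b\<bar>" for i
    using mod_support_cong[of "\<lambda>x. ?d x mod int m" ?d m "kuratowski i"] mod_length_pair[OF False m_ge_2]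
    by (simp add: mod_length_def)
  moreover have "\<bar>kuratowski a a - kuratowski a b\<bar> = D a b"
    using D_self D_sym[of a b] D_nonneg[of a b] by (simp add: kuratowski_def)
  moreover have "bdd_above (range (\<lambda>i. \<bar>kuratowski i a - kuratowski i b\<bar>))"
    by (rule bdd_aboveI2[OF kuratowski_lipschitz])
  ultimately show ?thesis
    unfolding unit_vec_diff[OF assms] sup_length_def
    by (intro antisym cSUP_least cSUP_upper2[where x=a]) (simp_all add: kuratowski_lipschitz)
qed

lemma length_value_unit_vec_diff:
  "a \<le> n \<Longrightarrow> b \<le> n \<Longrightarrow> length_value (unit_vec a \<otimes>\<^bsub>Z n\<^esub> inv\<^bsub>Z n\<^esub> unit_vec b) = D a b"
  unfolding length_value_def by (simp only: sup_length_unit_vec_diff clip_eq D_le_r)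

lemma length_value_unit_vec_le: "length_value (unit_vec a) \<le> 2 * (\<Sum>b\<le>a. D b 0)"
proof -
  have "sup_length (unit_vec a) \<le> 2 * (\<Sum>b\<le>a. D b 0)"
    using mod_length_kuratowski_le[OF unit_vec_in_Z[of a a]] by (intro sup_length_le) simp
  then show ?thesis
    using clip_le unfolding length_value_def by (rule order_trans[rotated])
qed

lemma unit_vec_diff_eq_one_iff:
  assumes "a \<le> n" "b \<le> n"
  shows "unit_vec a \<otimes>\<^bsub>Z n\<^esub> inv\<^bsub>Z n\<^esub> unit_vec b = (\<lambda>x. 0) \<longleftrightarrow> a = b"
  unfolding unit_vec_diff[OF assms]
proof
  assume "(\<lambda>x. ((if x = a then 1 else 0) - (if x = b then 1 else 0)) mod int m) = (\<lambda>x. 0)"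
  from fun_cong[OF this, of a] have "(1 - (if a = b then 1 else 0)) mod int m = 0"
    by simp
  then show "a = b"
    using m_ge_2 by (auto split: if_splits)
qed simp

lemma pvalue_nonzero_ind: "is_pvalue_on (Z n) nonzero_ind"
  unfolding is_pvalue_on_def
proof (intro conjI ballI)
  fix x assume "x \<in> carrier (Z n)"
  then show "nonzero_ind (inv\<^bsub>Z n\<^esub> x) = nonzero_ind x"
    using group.inv_eq_1_iff[OF group_Z] by (simp add: nonzero_ind_def)
qed (auto simp: nonzero_ind_def)

lemma is_value_on_mixed_value:
  assumes "0 < \<delta>" "\<delta> \<le> 1"
  shows "is_value_on (Z n) (mixed_value \<delta>)"
proof -
  have "is_value_on (Z n) (\<lambda>c. \<delta> * nonzero_ind c)"
    using pvalue_nonzero_ind assms(1)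
    by (auto simp: is_pvalue_on_def is_value_on_def nonzero_ind_def distrib_left[symmetric] intro: mult_left_mono)
  moreover have "is_pvalue_on (Z n) (\<lambda>c. (1 - \<delta>) * length_value c)"
    using assms by (intro pvalue_scale[OF pvalue_length_value]) simp
  ultimately show ?thesis
    using value_add_pvalue[OF _ _ group_Z] unfolding mixed_value_def by (simp add: add.commute)
qed

lemma mixed_value_le_r:
  assumes "0 \<le> \<delta>" "\<delta> \<le> 1"
  shows "ereal (mixed_value \<delta> c) \<le> r"
proof -
  have "length_value c \<le> 1" if "r = 1"
    unfolding length_value_def clip_def using that by simp
  then have "mixed_value \<delta> c \<le> (1 - \<delta>) * 1 + \<delta> * 1" if "r = 1"
    unfolding mixed_value_def using that assms
    by (intro add_mono mult_left_mono) (auto simp: nonzero_ind_def)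
  then show ?thesis
    using r_cases by (auto simp: one_ereal_def)
qed

lemma mixed_value_unit_vec_diff:
  "a \<le> n \<Longrightarrow> b \<le> n \<Longrightarrow> mixed_value \<delta> (unit_vec a \<otimes>\<^bsub>Z n\<^esub> inv\<^bsub>Z n\<^esub> unit_vec b) =
     (1 - \<delta>) * D a b + \<delta> * (if a = b then 0 else 1)"
  unfolding mixed_value_def nonzero_ind_def
  by (simp only: length_value_unit_vec_diff unit_vec_diff_eq_one_iff)

end

section \<open>Approximately isometric homomorphisms\<close>

lemma abs_diff_le_of_mixed_bounds:
  fixes d E i x :: real
  assumes "0 \<le> d" "0 < E" "E \<le> 1/4" "0 \<le> i" "i \<le> 1"
    and "(1 - E) * ((1 - E) * d + E * i) \<le> x" "x \<le> (1 + E) * ((1 - E) * d + E * i)"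
  shows "\<bar>x - d\<bar> \<le> 2 * E * (d + 1)"
proof -
  have dist: "2 * E * (d + 1) = 2 * (E * d) + 2 * E"
    by (simp add: algebra_simps)
  have "0 \<le> E * (E * d)" "0 \<le> (1 - E) * (E * i)"
    using assms by simp_all
  moreover have "(1 - E) * ((1 - E) * d + E * i) = d - 2 * (E * d) + E * (E * d) + (1 - E) * (E * i)"
    by (simp add: algebra_simps)
  ultimately have "d - 2 * E * (d + 1) \<le> x"
    using assms(2,6) dist by linarith
  have "E * i \<le> E" "E * (E * i) \<le> E"
    using assms by (auto intro!: mult_left_le mult_le_one)
  moreover have "0 \<le> E * (E * d)" "0 \<le> E * d"
    using assms by simp_all
  moreover have "(1 + E) * ((1 - E) * d + E * i) = d - E * (E * d) + E * i + E * (E * i)"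
    by (simp add: algebra_simps)
  ultimately have "x \<le> d + 2 * E * (d + 1)"
    using assms(7) dist by linarith
  with \<open>d - 2 * E * (d + 1) \<le> x\<close> show ?thesis
    by (simp add: abs_le_iff)
qed

locale bbG_embedding = pseudometric_values D m r for D m r +
  fixes N :: nat and p :: "'g::ab_group_add \<Rightarrow> real"
  assumes G2: "G2_property r N p" and m_eq_N: "N \<noteq> 0 \<Longrightarrow> m = N"
    and value_p: "is_value p" and p_le_r: "ereal (p x) \<le> r"
begin

definition eps :: "nat \<Rightarrow> real" where
  "eps n = (1/2) ^ (n + 2)"

abbreviation q :: "nat \<Rightarrow> (nat \<Rightarrow> int) \<Rightarrow> real" where
  "q n \<equiv> mixed_value (eps n)"

definition almost_isometric :: "nat \<Rightarrow> ((nat \<Rightarrow> int) \<Rightarrow> 'g) \<Rightarrow> bool" where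
  "almost_isometric n \<psi> \<longleftrightarrow> additive_on (carrier (Z n)) (Z n) \<psi> \<and>
     (\<forall>c\<in>carrier (Z n). (1 - eps n) * q n c \<le> p (\<psi> c) \<and> p (\<psi> c) \<le> (1 + eps n) * q n c)"

lemma eps_pos: "0 < eps n"
  by (simp add: eps_def)

lemma eps_le_pow: "eps n \<le> (1/2) ^ n"
  unfolding eps_def by (rule power_decreasing) auto

lemma eps_le: "eps n \<le> 1/4"
  using power_decreasing[of 2 "n + 2" "1/2::real"] by (simp add: eps_def power2_eq_square)

lemma eps_Suc: "eps (Suc n) = eps n / 2"
  by (simp add: eps_def)

lemma Z_exponent: "N \<noteq> 0 \<longrightarrow> (\<forall>x\<in>carrier (Z n). x [^]\<^bsub>Z n\<^esub> N = \<one>\<^bsub>Z n\<^esub>)"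
  using Zmod_vec_exponent m_ge_2 m_eq_N by auto

lemma value_q: "is_value_on (Z n) (q k)"
  using is_value_on_mixed_value eps_pos eps_le[of k] by simp

lemma q_le_r: "ereal (q k c) \<le> r"
  using mixed_value_le_r eps_pos[of k] eps_le[of k] by simp

lemma almost_isometric_0: "\<exists>\<psi>. almost_isometric 0 \<psi>"
proof -
  interpret Z0: group "Z 0" by (rule group_Z)
  have "q 0 \<one>\<^bsub>Z 0\<^esub> = 0"
    using is_value_onD(2)[OF value_q] by blast
  then have "\<exists>\<psi>. additive_on (carrier (Z 0)) (Z 0) \<psi> \<and> (\<forall>x\<in>{\<one>\<^bsub>Z 0\<^esub>}. p (0 - \<psi> x) \<le> eps 0) \<and>
      (\<forall>x\<in>carrier (Z 0). (1 - eps 0) * q 0 x \<le> p (\<psi> x) \<and> p (\<psi> x) \<le> (1 + eps 0) * q 0 x)"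
    using eps_pos eps_le[of 0] q_le_r value_zero[OF value_p]
    by (intro G2_property_finite_comm_group[OF G2 comm_group_Z finite_Zmod_vec Z_exponent value_q
          _ Z0.triv_subgroup]) (auto simp: additive_on_def)
  then show ?thesis
    unfolding almost_isometric_def by blast
qed

lemma is_value_on_almost_isometric:
  assumes "almost_isometric n \<psi>"
  shows "is_value_on (Z n) (\<lambda>c. p (\<psi> c))"
proof (rule group.is_value_on_additive[OF group_Z _ value_p])
  show "additive_on (carrier (Z n)) (Z n) \<psi>"
    using assms unfolding almost_isometric_def by blast
  fix x assume x: "x \<in> carrier (Z n)" "\<psi> x = 0"
  then have "(1 - eps n) * q n x \<le> 0"
    using assms value_zero[OF value_p] unfolding almost_isometric_def by auto
  then have "q n x \<le> 0"
    using eps_le[of n] by (simp add: mult_le_0_iff)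
  then have "q n x = 0"
    using is_value_onD(1)[OF value_q[of n n] x(1)] by linarith
  then show "x = \<one>\<^bsub>Z n\<^esub>"
    using is_value_onD(2)[OF value_q[of n n] x(1)] by simp
qed

lemma almost_isometric_amalgam:
  assumes "almost_isometric n \<psi>"
  obtains qA where "is_value_on (Z n \<times>\<times> Z (Suc n)) qA"
    "\<And>a. a \<in> carrier (Z n) \<Longrightarrow> qA (a, \<one>\<^bsub>Z (Suc n)\<^esub>) = p (\<psi> a)"
    "\<And>b. b \<in> carrier (Z (Suc n)) \<Longrightarrow> qA (\<one>\<^bsub>Z n\<^esub>, b) = q (Suc n) b"
    "\<And>c. c \<in> carrier (Z n) \<Longrightarrow> qA (inv\<^bsub>Z n\<^esub> c, c) \<le> eps n * (q n c + 1 + length_value c)"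
proof -
  have bnd: "\<And>c. c \<in> carrier (Z n) \<Longrightarrow> (1 - eps n) * q n c \<le> p (\<psi> c) \<and> p (\<psi> c) \<le> (1 + eps n) * q n c"
    using assms unfolding almost_isometric_def by auto
  define \<eta> where "\<eta> c = eps n * q n c + eps n * (nonzero_ind c + length_value c)" for c
  have "is_value_on (Z n) \<eta>"
    unfolding \<eta>_def using eps_pos[of n]
    by (intro value_add_pvalue[OF value_scale[OF value_q] pvalue_scale[OF pvalue_add] group_Z]
        pvalue_nonzero_ind pvalue_length_value) simp_all
  moreover have "p (\<psi> c) \<le> q (Suc n) c + \<eta> c \<and> q (Suc n) c \<le> p (\<psi> c) + \<eta> c"
    if c: "c \<in> carrier (Z n)" for c
  proof -
    have "0 \<le> eps n * length_value c" "0 \<le> eps n * nonzero_ind c" "0 \<le> eps n * q n c"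
      using eps_pos[of n] is_value_onD(1)[OF value_q c] length_value_nonneg[OF c]
      by (simp_all add: nonzero_ind_def)
    then show ?thesis
      using bnd[OF c] unfolding \<eta>_def mixed_value_def eps_Suc by (simp add: algebra_simps)
  qed
  ultimately interpret A: value_amalgam "Z n" "Z (Suc n)" "\<lambda>c. p (\<psi> c)" "q (Suc n)" \<eta>
    using is_value_on_almost_isometric[OF assms]
    by (intro value_amalgam.intro comm_group_Z value_amalgam_axioms.intro finite_Zmod_vec value_q)
      (auto simp del: Zmod_vec_simps(1) intro: Zmod_vec_mono[of n "Suc n", THEN subsetD])
  have "\<eta> c \<le> eps n * (q n c + 1 + length_value c)" for c
    using eps_pos[of n] unfolding \<eta>_def nonzero_ind_def by (simp add: algebra_simps)
  then show thesis
    using that[of A.amalgam] A.is_value_on_amalgam A.amalgam_fst A.amalgam_snd A.amalgam_inv_diag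
    by (meson order_trans)
qed

lemma G2_extension_DirProd:
  assumes Q: "is_value_on (Z n \<times>\<times> Z k) Q" and \<psi>: "additive_on (carrier (Z n)) (Z n) \<psi>"
    and Q_fst: "\<And>a. a \<in> carrier (Z n) \<Longrightarrow> Q (a, \<one>\<^bsub>Z k\<^esub>) = p (\<psi> a)"
    and \<epsilon>: "0 < \<epsilon>" "\<epsilon> < 1"
  shows "\<exists>\<xi>. additive_on (carrier (Z n \<times>\<times> Z k)) (Z n \<times>\<times> Z k) \<xi> \<and>
    (\<forall>a\<in>carrier (Z n). p (\<psi> a - \<xi> (a, \<one>\<^bsub>Z k\<^esub>)) \<le> \<epsilon>) \<and>
    (\<forall>x\<in>carrier (Z n \<times>\<times> Z k). (1 - \<epsilon>) * clip r (Q x) \<le> p (\<xi> x) \<and> p (\<xi> x) \<le> (1 + \<epsilon>) * clip r (Q x))"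
proof -
  let ?A = "Z n \<times>\<times> Z k" and ?K = "carrier (Z n) \<times> {\<one>\<^bsub>Z k\<^esub>}"
  interpret Zn: comm_group "Z n" by (rule comm_group_Z)
  interpret Zk: comm_group "Z k" by (rule comm_group_Z)
  have "\<exists>\<xi>. additive_on (carrier ?A) ?A \<xi> \<and> (\<forall>x\<in>?K. p (\<psi> (fst x) - \<xi> x) \<le> \<epsilon>) \<and>
      (\<forall>x\<in>carrier ?A. (1 - \<epsilon>) * clip r (Q x) \<le> p (\<xi> x) \<and> p (\<xi> x) \<le> (1 + \<epsilon>) * clip r (Q x))"
  proof (rule G2_property_finite_comm_group[OF G2 DirProd_comm_group[OF comm_group_Z comm_group_Z]])
    show "N \<noteq> 0 \<longrightarrow> (\<forall>x\<in>carrier ?A. x [^]\<^bsub>?A\<^esub> N = \<one>\<^bsub>?A\<^esub>)"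
      using Z_exponent DirProd_nat_pow[OF Zn.is_monoid Zk.is_monoid] by auto
    show "subgroup ?K ?A"
      by (rule DirProd_subgroups[OF Zn.is_group Zn.subgroup_self Zk.is_group Zk.triv_subgroup])
    show "additive_on ?K ?A (\<lambda>x. \<psi> (fst x))"
      using \<psi> by (auto simp: additive_on_def)
    show "\<forall>x\<in>?K. p (\<psi> (fst x)) = clip r (Q x)"
      using Q_fst p_le_r by (auto simp: clip_eq)
  qed (use finite_Zmod_vec value_clip[OF Q] \<epsilon> in \<open>auto simp: clip_le_r r_cases\<close>)
  then show ?thesis
    by auto
qed

lemma almost_isometric_extension:
  assumes "almost_isometric n \<psi>"
  obtains \<xi> where "additive_on (carrier (Z n \<times>\<times> Z (Suc n))) (Z n \<times>\<times> Z (Suc n)) \<xi>"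
    "\<And>a. a \<in> carrier (Z n) \<Longrightarrow> p (\<psi> a - \<xi> (a, \<one>\<^bsub>Z (Suc n)\<^esub>)) \<le> eps (Suc n)"
    "\<And>b. b \<in> carrier (Z (Suc n)) \<Longrightarrow>
       (1 - eps (Suc n)) * q (Suc n) b \<le> p (\<xi> (\<one>\<^bsub>Z n\<^esub>, b)) \<and> p (\<xi> (\<one>\<^bsub>Z n\<^esub>, b)) \<le> (1 + eps (Suc n)) * q (Suc n) b"
    "\<And>c. c \<in> carrier (Z n) \<Longrightarrow> p (\<xi> (inv\<^bsub>Z n\<^esub> c, c)) \<le> 2 * eps n * (q n c + 1 + length_value c)"
proof -
  interpret Zn: group "Z n" by (rule group_Z)
  obtain qA where qA: "is_value_on (Z n \<times>\<times> Z (Suc n)) qA"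
    "\<And>a. a \<in> carrier (Z n) \<Longrightarrow> qA (a, \<one>\<^bsub>Z (Suc n)\<^esub>) = p (\<psi> a)"
    "\<And>b. b \<in> carrier (Z (Suc n)) \<Longrightarrow> qA (\<one>\<^bsub>Z n\<^esub>, b) = q (Suc n) b"
    "\<And>c. c \<in> carrier (Z n) \<Longrightarrow> qA (inv\<^bsub>Z n\<^esub> c, c) \<le> eps n * (q n c + 1 + length_value c)"
    using almost_isometric_amalgam[OF assms] by blast
  have hom: "additive_on (carrier (Z n)) (Z n) \<psi>"
    using assms unfolding almost_isometric_def by blast
  have lt1: "eps (Suc n) < 1"
    using eps_le[of "Suc n"] by simp
  obtain \<xi> where \<xi>: "additive_on (carrier (Z n \<times>\<times> Z (Suc n))) (Z n \<times>\<times> Z (Suc n)) \<xi>"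
      "\<And>a. a \<in> carrier (Z n) \<Longrightarrow> p (\<psi> a - \<xi> (a, \<one>\<^bsub>Z (Suc n)\<^esub>)) \<le> eps (Suc n)"
      "\<And>x. x \<in> carrier (Z n \<times>\<times> Z (Suc n)) \<Longrightarrow>
         (1 - eps (Suc n)) * clip r (qA x) \<le> p (\<xi> x) \<and> p (\<xi> x) \<le> (1 + eps (Suc n)) * clip r (qA x)"
    using G2_extension_DirProd[OF qA(1) hom qA(2) eps_pos lt1] by blast
  have "p (\<xi> (inv\<^bsub>Z n\<^esub> c, c)) \<le> 2 * eps n * (q n c + 1 + length_value c)" if c: "c \<in> carrier (Z n)" for c
  proof -
    have c': "(inv\<^bsub>Z n\<^esub> c, c) \<in> carrier (Z n \<times>\<times> Z (Suc n))"
      using Zn.inv_closed[OF c] subsetD[OF Zmod_vec_mono[of n "Suc n" m] c]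
      by (simp del: Zmod_vec_simps(1))
    have "p (\<xi> (inv\<^bsub>Z n\<^esub> c, c)) \<le> (1 + eps (Suc n)) * qA (inv\<^bsub>Z n\<^esub> c, c)"
      using \<xi>(3)[OF c'] clip_le[of r] eps_pos[of "Suc n"] by (smt (verit) mult_left_mono)
    also have "\<dots> \<le> 2 * (eps n * (q n c + 1 + length_value c))"
      using qA(4)[OF c] is_value_onD(1)[OF qA(1) c'] eps_le[of "Suc n"] by (intro mult_mono) auto
    finally show ?thesis
      by simp
  qed
  moreover have "(1 - eps (Suc n)) * q (Suc n) b \<le> p (\<xi> (\<one>\<^bsub>Z n\<^esub>, b)) \<and> p (\<xi> (\<one>\<^bsub>Z n\<^esub>, b)) \<le> (1 + eps (Suc n)) * q (Suc n) b"
    if "b \<in> carrier (Z (Suc n))" for b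
    using \<xi>(3)[of "(\<one>\<^bsub>Z n\<^esub>, b)"] that qA(3) q_le_r m_ge_2 by (auto simp: clip_eq)
  ultimately show thesis
    using that \<xi>(1,2) by auto
qed

lemma almost_isometric_step:
  assumes "almost_isometric n \<psi>"
  shows "\<exists>\<psi>'. almost_isometric (Suc n) \<psi>' \<and>
    (\<forall>c\<in>carrier (Z n). p (\<psi>' c - \<psi> c) \<le> 2 * eps n * (q n c + 1 + length_value c) + eps (Suc n))"
proof -
  let ?A = "Z n \<times>\<times> Z (Suc n)"
  interpret Zn: comm_group "Z n" by (rule comm_group_Z)
  interpret Zs: comm_group "Z (Suc n)" by (rule comm_group_Z)
  interpret A: group ?A by (rule DirProd_group[OF Zn.is_group Zs.is_group])
  obtain \<xi> where \<xi>: "additive_on (carrier ?A) ?A \<xi>"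
    "\<And>a. a \<in> carrier (Z n) \<Longrightarrow> p (\<psi> a - \<xi> (a, \<one>\<^bsub>Z (Suc n)\<^esub>)) \<le> eps (Suc n)"
    "\<And>b. b \<in> carrier (Z (Suc n)) \<Longrightarrow>
       (1 - eps (Suc n)) * q (Suc n) b \<le> p (\<xi> (\<one>\<^bsub>Z n\<^esub>, b)) \<and> p (\<xi> (\<one>\<^bsub>Z n\<^esub>, b)) \<le> (1 + eps (Suc n)) * q (Suc n) b"
    "\<And>c. c \<in> carrier (Z n) \<Longrightarrow> p (\<xi> (inv\<^bsub>Z n\<^esub> c, c)) \<le> 2 * eps n * (q n c + 1 + length_value c)"
    using almost_isometric_extension[OF assms] by blast
  define \<psi>' where "\<psi>' b = \<xi> (\<one>\<^bsub>Z n\<^esub>, b)" for b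
  have "almost_isometric (Suc n) \<psi>'"
    unfolding almost_isometric_def
  proof (intro conjI ballI)
    show "additive_on (carrier (Z (Suc n))) (Z (Suc n)) \<psi>'"
      using additive_onD[OF \<xi>(1), of "(\<one>\<^bsub>Z n\<^esub>, _)" "(\<one>\<^bsub>Z n\<^esub>, _)"]
      by (simp add: additive_on_def \<psi>'_def del: Zmod_vec_simps)
  qed (use \<xi>(3) \<psi>'_def in auto)
  moreover have "p (\<psi>' c - \<psi> c) \<le> 2 * eps n * (q n c + 1 + length_value c) + eps (Suc n)"
    if c: "c \<in> carrier (Z n)" for c
  proof -
    have c1: "(c, \<one>\<^bsub>Z (Suc n)\<^esub>) \<in> carrier ?A" and c2: "(\<one>\<^bsub>Z n\<^esub>, c) \<in> carrier ?A"
      using c subsetD[OF Zmod_vec_mono[of n "Suc n" m] c] by (simp_all del: Zmod_vec_simps)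
    \<comment> \<open>The diagonal element \<open>(c\<inverse>, c)\<close>, small for the amalgam, compares the two copies of \<open>c\<close>.\<close>
    have "\<xi> (inv\<^bsub>Z n\<^esub> c, c) = \<xi> ((\<one>\<^bsub>Z n\<^esub>, c) \<otimes>\<^bsub>?A\<^esub> inv\<^bsub>?A\<^esub> (c, \<one>\<^bsub>Z (Suc n)\<^esub>))"
      using c c2 by (simp add: inv_DirProd[OF Zn.is_group Zs.is_group] del: Zmod_vec_simps)
    also have "\<dots> = \<psi>' c - \<xi> (c, \<one>\<^bsub>Z (Suc n)\<^esub>)"
      using additive_onD[OF \<xi>(1) c2 A.inv_closed[OF c1]] A.additive_on_inv[OF \<xi>(1) c1]
      by (simp add: \<psi>'_def)
    finally have "\<psi>' c - \<psi> c = \<xi> (inv\<^bsub>Z n\<^esub> c, c) - (\<psi> c - \<xi> (c, \<one>\<^bsub>Z (Suc n)\<^esub>))"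
      by (simp add: algebra_simps)
    then show ?thesis
      using value_diff_le[OF value_p] \<xi>(2,4)[OF c] by (smt (verit))
  qed
  ultimately show ?thesis
    by blast
qed

definition approx_embedding :: "nat \<Rightarrow> (nat \<Rightarrow> int) \<Rightarrow> 'g" where
  "approx_embedding = rec_nat (SOME \<psi>. almost_isometric 0 \<psi>)
     (\<lambda>n \<psi>. SOME \<psi>'. almost_isometric (Suc n) \<psi>' \<and>
        (\<forall>c\<in>carrier (Z n). p (\<psi>' c - \<psi> c) \<le> 2 * eps n * (q n c + 1 + length_value c) + eps (Suc n)))"

lemma almost_isometric_approx_embedding: "almost_isometric n (approx_embedding n)"
proof (induction n)
  case 0
  show ?case
    unfolding approx_embedding_def using someI_ex[OF almost_isometric_0] by simp
next
  case (Suc n)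
  then show ?case
    unfolding approx_embedding_def using someI_ex[OF almost_isometric_step[OF Suc.IH[unfolded approx_embedding_def]]] by simp
qed

lemma approx_embedding_Suc_close:
  "c \<in> carrier (Z n) \<Longrightarrow> p (approx_embedding (Suc n) c - approx_embedding n c) \<le>
     2 * eps n * (q n c + 1 + length_value c) + eps (Suc n)"
  using someI_ex[OF almost_isometric_step[OF almost_isometric_approx_embedding[of n, unfolded approx_embedding_def]]]
  unfolding approx_embedding_def by simp

lemma approx_embedding_unit_vec_Suc_close:
  assumes "a \<le> n"
  shows "p (approx_embedding (Suc n) (unit_vec a) - approx_embedding n (unit_vec a)) \<le>
    (8 * (\<Sum>b\<le>a. D b 0) + 5) * eps n"
proof -
  let ?K = "2 * (\<Sum>b\<le>a. D b 0)"
  have c: "unit_vec a \<in> carrier (Z n)"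
    by (rule unit_vec_in_Z[OF assms])
  have lv: "0 \<le> length_value (unit_vec a)" "length_value (unit_vec a) \<le> ?K"
    using length_value_nonneg[OF c] length_value_unit_vec_le by auto
  have "eps n * nonzero_ind (unit_vec a) \<le> 1"
    using eps_le[of n] eps_pos[of n] by (simp add: nonzero_ind_def)
  moreover have "(1 - eps n) * length_value (unit_vec a) \<le> length_value (unit_vec a)"
    using lv eps_pos[of n] eps_le[of n] by (intro mult_left_le_one_le) auto
  ultimately have "q n (unit_vec a) \<le> ?K + 1"
    using lv unfolding mixed_value_def by linarith
  then have "2 * eps n * (q n (unit_vec a) + 1 + length_value (unit_vec a)) \<le> 2 * eps n * (2 * ?K + 2)"
    using lv eps_pos[of n] by (intro mult_left_mono) auto
  then show ?thesis
    using approx_embedding_Suc_close[OF c] eps_Suc[of n] eps_pos[of n] by (simp add: algebra_simps)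
qed

lemma approx_embedding_dist:
  assumes "a \<le> n" "b \<le> n"
  shows "\<bar>p (approx_embedding n (unit_vec a) - approx_embedding n (unit_vec b)) - D a b\<bar> \<le> 2 * eps n * (D a b + 1)"
proof -
  interpret Zn: group "Z n" by (rule group_Z)
  let ?\<psi> = "approx_embedding n" and ?w = "unit_vec a \<otimes>\<^bsub>Z n\<^esub> inv\<^bsub>Z n\<^esub> unit_vec b"
  have hom: "additive_on (carrier (Z n)) (Z n) ?\<psi>"
    and bnd: "(1 - eps n) * q n ?w \<le> p (?\<psi> ?w)" "p (?\<psi> ?w) \<le> (1 + eps n) * q n ?w"
    using almost_isometric_approx_embedding[of n] unit_vec_in_Z[OF assms(1)] unit_vec_in_Z[OF assms(2)]
    unfolding almost_isometric_def by (simp_all del: Zmod_vec_simps)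
  have "?\<psi> ?w = ?\<psi> (unit_vec a) + ?\<psi> (inv\<^bsub>Z n\<^esub> unit_vec b)"
    by (rule additive_onD[OF hom unit_vec_in_Z[OF assms(1)] Zn.inv_closed[OF unit_vec_in_Z[OF assms(2)]]])
  then have "?\<psi> ?w = ?\<psi> (unit_vec a) - ?\<psi> (unit_vec b)"
    using Zn.additive_on_inv[OF hom unit_vec_in_Z[OF assms(2)]] by simp
  moreover have "q n ?w = (1 - eps n) * D a b + eps n * (if a = b then 0 else 1)"
    by (rule mixed_value_unit_vec_diff[OF assms])
  ultimately show ?thesis
    using bnd D_nonneg[of a b] eps_pos[of n] eps_le[of n] by (intro abs_diff_le_of_mixed_bounds) auto
qed

text \<open>The unit vector \<open>e\<^sub>a\<close> lies in \<open>Z n\<close> only for \<open>a \<le> n\<close>, hence the \<open>max a n\<close>.\<close>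

definition unit_image :: "nat \<Rightarrow> nat \<Rightarrow> 'g" where
  "unit_image a n = approx_embedding (max a n) (unit_vec a)"

lemma MCauchy_unit_image: "Metric_space.MCauchy UNIV (value_dist p) (unit_image a)"
proof (rule Metric_space.MCauchy_geometric[OF Metric_space_value_dist[OF value_p]])
  let ?C = "8 * (\<Sum>b\<le>a. D b 0) + 5"
  have C: "0 \<le> ?C"
    using D_nonneg by (simp add: sum_nonneg)
  show "value_dist p (unit_image a n) (unit_image a (Suc n)) \<le> ?C * (1/2) ^ n" for n
  proof (cases "a \<le> n")
    case True
    then have "value_dist p (unit_image a n) (unit_image a (Suc n)) \<le> ?C * eps n"
      using approx_embedding_unit_vec_Suc_close[OF True] value_diff_commute[OF value_p]
      by (simp add: unit_image_def value_dist_def max_absorb2 le_SucI)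
    also have "\<dots> \<le> ?C * (1/2) ^ n"
      using C eps_le_pow by (rule mult_left_mono[rotated])
    finally show ?thesis .
  next
    case False
    then have "max a (Suc n) = a" "max a n = a"
      by auto
    then show ?thesis
      using C by (simp add: unit_image_def value_dist_def value_zero[OF value_p])
  qed
qed simp

lemma unit_image_dist_tendsto:
  "(\<lambda>n. value_dist p (unit_image a n) (unit_image b n)) \<longlonglongrightarrow> D a b"
proof (rule LIM_zero_cancel, rule Lim_null_comparison)
  show "\<forall>\<^sub>F n in sequentially. norm (value_dist p (unit_image a n) (unit_image b n) - D a b)
      \<le> (1/2) ^ n * (2 * (D a b + 1))"
    using eventually_ge_at_top[of "max a b"]
  proof eventually_elim
    case (elim n)
    then have "norm (value_dist p (unit_image a n) (unit_image b n) - D a b) \<le> 2 * eps n * (D a b + 1)"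
      using approx_embedding_dist[of a n b] by (simp add: unit_image_def value_dist_def max_absorb2)
    also have "\<dots> = eps n * (2 * (D a b + 1))"
      by (simp add: algebra_simps)
    also have "\<dots> \<le> (1/2) ^ n * (2 * (D a b + 1))"
      using eps_le_pow[of n] D_nonneg[of a b] by (intro mult_right_mono) auto
    finally show ?case .
  qed
  show "(\<lambda>n. (1/2) ^ n * (2 * (D a b + 1))) \<longlonglongrightarrow> 0"
    by (intro tendsto_mult_left_zero LIMSEQ_realpow_zero) auto
qed

lemma exists_isometric_embedding:
  assumes "Metric_space.mcomplete UNIV (value_dist p)"
  shows "\<exists>f. \<forall>a b. p (f a - f b) = D a b"
proof -
  interpret V: Metric_space UNIV "value_dist p"
    by (rule Metric_space_value_dist[OF value_p])
  have "\<forall>a. \<exists>l. limitin V.mtopology (unit_image a) l sequentially"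
    using MCauchy_unit_image assms unfolding V.mcomplete_def by blast
  then obtain f where f: "\<And>a. limitin V.mtopology (unit_image a) (f a) sequentially"
    by metis
  have "p (f a - f b) = D a b" for a b
    using LIMSEQ_unique[OF V.tendsto_mdist[OF f f] unit_image_dist_tendsto] by (simp add: value_dist_def)
  then show ?thesis
    by blast
qed

end

theorem theorem5p12:
  fixes r :: ereal and N :: nat
    and p :: "'g::ab_group_add \<Rightarrow> real"
    and M :: "'a set" and d :: "'a \<Rightarrow> 'a \<Rightarrow> real"
  assumes "r = 1 \<or> r = \<infinity>"
    and "N \<noteq> 1"
    and "is_bbG r N p"
    and "Metric_space M d"
    and "separable_space (Metric_space.mtopology M d)"
    and "\<forall>x\<in>M. \<forall>y\<in>M. ereal (d x y) \<le> r"
  shows "\<exists>f :: 'a \<Rightarrow> 'g. \<forall>x\<in>M. \<forall>y\<in>M. value_dist p (f x) (f y) = d x y"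
proof (cases "M = {}")
  case False
  interpret X: Metric_space M d by fact
  have p: "is_value p" "\<And>x. ereal (p x) \<le> r" "Metric_space.mcomplete UNIV (value_dist p)" "G2_property r N p"
    using assms(3) unfolding is_bbG_def in_frakG_def by auto
  obtain xs :: "nat \<Rightarrow> 'a" where xs: "range xs \<subseteq> M" "X.mtopology closure_of range xs = M"
    using X.separable_dense_sequence[OF assms(5) False] .
  then have xs_in: "xs a \<in> M" for a
    by auto
  interpret bbG_embedding "\<lambda>a b. d (xs a) (xs b)" "if N = 0 then 2 else N" r N p
  proof unfold_locales
    show "d (xs a) (xs c) \<le> d (xs a) (xs b) + d (xs b) (xs c)" for a b c
      using X.triangle xs_in by blast
  qed (use assms(1,2,6) p xs_in X.commute in auto)
  obtain f0 where "\<And>a b. p (f0 a - f0 b) = d (xs a) (xs b)"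
    using exists_isometric_embedding[OF p(3)] by blast
  then have "\<forall>x\<in>range xs. \<forall>y\<in>range xs. value_dist p (f0 (inv_into UNIV xs x)) (f0 (inv_into UNIV xs y)) = d x y"
    by (auto simp: value_dist_def f_inv_into_f)
  then have "\<exists>g. g ` M \<subseteq> UNIV \<and> (\<forall>x\<in>M. \<forall>y\<in>M. value_dist p (g x) (g y) = d x y)"
    by (rule isometry_extend_from_dense[OF assms(4) Metric_space_value_dist[OF p(1)] p(3) xs subset_UNIV])
  then show ?thesis
    by blast
qed simp

end
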